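(* Let $k$ be a commutative ring, $(H,\alpha)$ a monoidal Hom-Hopf algebra, $(A,\beta)$ a right $(H,\alpha)$-Hom-comodule algebra with a total integral $\phi:H\to A$ which is multiplicative ($\phi(hg)=\phi(h)\phi(g)$), and $(M,\mu)$ a relative Hom-Hopf module. Let $M_0=\{m\in M:\rho_M(m)=\mu^{-1}(m)\otimes 1_H\}$ and $C=\{b\in A:\rho_A(b)=\beta^{-1}(b)\otimes1_H\}$, and let $\tau_M:M\to M$, $\tau_M(m)=m_{[0]}\cdot\phi(S(m_{[1]}))$. Then: (1) $\tau_M(m)\in M_0$ for all $m\in M$, and $\tau_M|_{M_0}=\mathrm{id}_{M_0}$; (2) $\tau_A:A\to C$, $b\mapsto b_{[0]}\phi(S(b_{[1]}))$, is a morphism of left $(C,\beta)$-Hom-modules (via multiplication in $A$), so that $(C,\beta)$ is a direct summand of $(A,\beta)$ as a left $(C,\beta)$-Hom-module; (3) if moreover $\phi(H)\subseteq Z(A)$, then $\tau_M$ is a morphism of right $(C,\beta)$-Hom-modules, and the exact sequence $(M,\mu)\xrightarrow{\tau_M}(M_0,\mu)\to0$ splits as a sequence of right $(C,\beta)$-Hom-modules.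
   Context: Hom-category: objects $(M,\mu)$ with $\mu$ a $k$-linear automorphism; morphisms commute with the automorphisms. Monoidal Hom-algebra $(A,\alpha)$: $\alpha(ab)=\alpha(a)\alpha(b)$, $\alpha(1_A)=1_A$, $\alpha(a)(bc)=(ab)\alpha(c)$, $a1_A=1_Aa=\alpha(a)$. Monoidal Hom-coalgebra $(C,\gamma)$: $\Delta(c)=c_{(1)}\otimes c_{(2)}$, $\varepsilon$, $\Delta\gamma=(\gamma\otimes\gamma)\Delta$, $\varepsilon\gamma=\varepsilon$, $\gamma^{-1}(c_{(1)})\otimes c_{(2)(1)}\otimes c_{(2)(2)}=c_{(1)(1)}\otimes c_{(1)(2)}\otimes\gamma(c_{(2)})$, $\varepsilon(c_{(1)})c_{(2)}=\varepsilon(c_{(2)})c_{(1)}=\gamma^{-1}(c)$. Monoidal Hom-Hopf algebra $(H,\alpha)$: both, $\Delta,\varepsilon$ multiplicative and unital, antipode $S$ with $S(h_{(1)})h_{(2)}=h_{(1)}S(h_{(2)})=\varepsilon(h)1_H$, $S\alpha=\alpha S$. Right $(A,\beta)$-Hom-module: $(m\cdot a)\cdot\beta(b)=\mu(m)\cdot(ab)$, $m\cdot1_A=\mu(m)$, $\mu(m\cdot a)=\mu(m)\cdot\beta(a)$ (left modules analogously). Right $(H,\alpha)$-Hom-comodule: $\rho(m)=m_{[0]}\otimes m_{[1]}$, $m_{[0][0]}\otimes m_{[0][1]}\otimes\alpha^{-1}(m_{[1]})=\mu^{-1}(m_{[0]})\otimes\Delta(m_{[1]})$, $m_{[0]}\varepsilon(m_{[1]})=\mu^{-1}(m)$,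 $\rho(\mu(m))=\mu(m_{[0]})\otimes\alpha(m_{[1]})$. Right Hom-comodule algebra $(A,\beta)$: $\rho(ab)=a_{[0]}b_{[0]}\otimes a_{[1]}b_{[1]}$, $\rho(1_A)=1_A\otimes1_H$. Relative Hom-Hopf module: right $(A,\beta)$-Hom-module and right $(H,\alpha)$-Hom-comodule with $\rho(m\cdot a)=m_{[0]}\cdot a_{[0]}\otimes m_{[1]}a_{[1]}$. Total integral: $k$-linear $\phi:H\to A$ with $\rho_A\phi=(\phi\otimes\mathrm{id})\Delta$, $\phi\alpha=\beta\phi$, $\phi(1_H)=1_A$. $Z(A)$ is the center of $A$. $C$ is a Hom-subalgebra of $A$ and $(M_0,\mu|_{M_0})$ is a right $(C,\beta)$-Hom-module. *)

theory Defs
  imports Main "HOL.Modules"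
begin

text \<open>An element of the tensor product M (x)_k N is represented by a finite list of pure
  tensors [(m1,n1),...,(mr,nr)], standing for the sum m1(x)n1 + ... + mr(x)nr.  Two such
  lists represent the same element iff they are related by the congruence generated by the
  defining relations of the tensor product (bi-additivity, k-balancedness, commutativity and
  associativity of the formal sum).  The quotient is exactly M (x)_k N.\<close>

inductive tensor_eq2 ::
  "('k::comm_ring_1 \<Rightarrow> 'm::ab_group_add \<Rightarrow> 'm) \<Rightarrow> ('k \<Rightarrow> 'n::ab_group_add \<Rightarrow> 'n)
   \<Rightarrow> ('m \<times> 'n) list \<Rightarrow> ('m \<times> 'n) list \<Rightarrow> bool"
  for sM sN where
  t2_refl: "tensor_eq2 sM sN xs xs"
| t2_sym: "tensor_eq2 sM sN xs ys \<Longrightarrow> tensor_eq2 sM sN ys xs"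
| t2_trans: "tensor_eq2 sM sN xs ys \<Longrightarrow> tensor_eq2 sM sN ys zs \<Longrightarrow> tensor_eq2 sM sN xs zs"
| t2_ctx: "tensor_eq2 sM sN xs ys \<Longrightarrow> tensor_eq2 sM sN (us @ xs @ vs) (us @ ys @ vs)"
| t2_swap: "tensor_eq2 sM sN [a, b] [b, a]"
| t2_addl: "tensor_eq2 sM sN [(m + m', n)] [(m, n), (m', n)]"
| t2_addr: "tensor_eq2 sM sN [(m, n + n')] [(m, n), (m, n')]"
| t2_zerol: "tensor_eq2 sM sN [(0, n)] []"
| t2_zeror: "tensor_eq2 sM sN [(m, 0)] []"
| t2_bal: "tensor_eq2 sM sN [(sM c m, n)] [(m, sN c n)]"

inductive tensor_eq3 ::
  "('k::comm_ring_1 \<Rightarrow> 'm::ab_group_add \<Rightarrow> 'm) \<Rightarrow> ('k \<Rightarrow> 'n::ab_group_add \<Rightarrow> 'n)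
   \<Rightarrow> ('k \<Rightarrow> 'p::ab_group_add \<Rightarrow> 'p)
   \<Rightarrow> ('m \<times> 'n \<times> 'p) list \<Rightarrow> ('m \<times> 'n \<times> 'p) list \<Rightarrow> bool"
  for sM sN sP where
  t3_refl: "tensor_eq3 sM sN sP xs xs"
| t3_sym: "tensor_eq3 sM sN sP xs ys \<Longrightarrow> tensor_eq3 sM sN sP ys xs"
| t3_trans: "tensor_eq3 sM sN sP xs ys \<Longrightarrow> tensor_eq3 sM sN sP ys zs \<Longrightarrow> tensor_eq3 sM sN sP xs zs"
| t3_ctx: "tensor_eq3 sM sN sP xs ys \<Longrightarrow> tensor_eq3 sM sN sP (us @ xs @ vs) (us @ ys @ vs)"
| t3_swap: "tensor_eq3 sM sN sP [a, b] [b, a]"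
| t3_add1: "tensor_eq3 sM sN sP [(m + m', n, p)] [(m, n, p), (m', n, p)]"
| t3_add2: "tensor_eq3 sM sN sP [(m, n + n', p)] [(m, n, p), (m, n', p)]"
| t3_add3: "tensor_eq3 sM sN sP [(m, n, p + p')] [(m, n, p), (m, n, p')]"
| t3_zero1: "tensor_eq3 sM sN sP [(0, n, p)] []"
| t3_zero2: "tensor_eq3 sM sN sP [(m, 0, p)] []"
| t3_zero3: "tensor_eq3 sM sN sP [(m, n, 0)] []"
| t3_bal12: "tensor_eq3 sM sN sP [(sM c m, n, p)] [(m, sN c n, p)]"
| t3_bal23: "tensor_eq3 sM sN sP [(m, sN c n, p)] [(m, n, sP c p)]"

definition hom_object :: "('k::comm_ring_1 \<Rightarrow> 'm::ab_group_add \<Rightarrow> 'm) \<Rightarrow> ('m \<Rightarrow> 'm) \<Rightarrow> bool" where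
  "hom_object sM \<mu> \<longleftrightarrow> module sM \<and> module_hom sM sM \<mu> \<and> bij \<mu>"

definition k_bilinear ::
  "('k::comm_ring_1 \<Rightarrow> 'a::ab_group_add \<Rightarrow> 'a) \<Rightarrow> ('k \<Rightarrow> 'b::ab_group_add \<Rightarrow> 'b)
   \<Rightarrow> ('k \<Rightarrow> 'c::ab_group_add \<Rightarrow> 'c) \<Rightarrow> ('a \<Rightarrow> 'b \<Rightarrow> 'c) \<Rightarrow> bool" where
  "k_bilinear sA sB sC f \<longleftrightarrow> (\<forall>a. module_hom sB sC (f a)) \<and> (\<forall>b. module_hom sA sC (\<lambda>a. f a b))"

definition monoidal_hom_algebra ::
  "('k::comm_ring_1 \<Rightarrow> 'a::ab_group_add \<Rightarrow> 'a) \<Rightarrow> ('a \<Rightarrow> 'a \<Rightarrow> 'a) \<Rightarrow> 'a \<Rightarrow> ('a \<Rightarrow> 'a) \<Rightarrow> bool" where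
  "monoidal_hom_algebra sA mul one \<alpha> \<longleftrightarrow>
     hom_object sA \<alpha> \<and> k_bilinear sA sA sA mul \<and>
     (\<forall>a b. \<alpha> (mul a b) = mul (\<alpha> a) (\<alpha> b)) \<and> \<alpha> one = one \<and>
     (\<forall>a b c. mul (\<alpha> a) (mul b c) = mul (mul a b) (\<alpha> c)) \<and>
     (\<forall>a. mul a one = \<alpha> a \<and> mul one a = \<alpha> a)"

text \<open>Comultiplication: Delta c is a representative list of pure tensors of Delta(c) in C (x) C.\<close>
definition monoidal_hom_coalgebra ::
  "('k::comm_ring_1 \<Rightarrow> 'c::ab_group_add \<Rightarrow> 'c) \<Rightarrow> ('c \<Rightarrow> ('c \<times> 'c) list) \<Rightarrow> ('c \<Rightarrow> 'k)
   \<Rightarrow> ('c \<Rightarrow> 'c) \<Rightarrow> bool" where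
  "monoidal_hom_coalgebra sC \<Delta> \<epsilon> \<gamma> \<longleftrightarrow>
     hom_object sC \<gamma> \<and>
     (\<forall>x y. tensor_eq2 sC sC (\<Delta> (x + y)) (\<Delta> x @ \<Delta> y)) \<and>
     (\<forall>r x. tensor_eq2 sC sC (\<Delta> (sC r x)) (map (\<lambda>(a, b). (sC r a, b)) (\<Delta> x))) \<and>
     module_hom sC (*) \<epsilon> \<and>
     (\<forall>c. tensor_eq2 sC sC (\<Delta> (\<gamma> c)) (map (\<lambda>(a, b). (\<gamma> a, \<gamma> b)) (\<Delta> c))) \<and>
     (\<forall>c. \<epsilon> (\<gamma> c) = \<epsilon> c) \<and>
     (\<forall>c. tensor_eq3 sC sC sC
            (concat (map (\<lambda>(a, b). map (\<lambda>(x, y). (inv \<gamma> a, x, y)) (\<Delta> b)) (\<Delta> c)))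
            (concat (map (\<lambda>(a, b). map (\<lambda>(x, y). (x, y, \<gamma> b)) (\<Delta> a)) (\<Delta> c)))) \<and>
     (\<forall>c. sum_list (map (\<lambda>(a, b). sC (\<epsilon> a) b) (\<Delta> c)) = inv \<gamma> c) \<and>
     (\<forall>c. sum_list (map (\<lambda>(a, b). sC (\<epsilon> b) a) (\<Delta> c)) = inv \<gamma> c)"

definition monoidal_hom_hopf ::
  "('k::comm_ring_1 \<Rightarrow> 'h::ab_group_add \<Rightarrow> 'h) \<Rightarrow> ('h \<Rightarrow> 'h \<Rightarrow> 'h) \<Rightarrow> 'h
   \<Rightarrow> ('h \<Rightarrow> ('h \<times> 'h) list) \<Rightarrow> ('h \<Rightarrow> 'k) \<Rightarrow> ('h \<Rightarrow> 'h) \<Rightarrow> ('h \<Rightarrow> 'h) \<Rightarrow> bool" where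
  "monoidal_hom_hopf sH mul one \<Delta> \<epsilon> S \<alpha> \<longleftrightarrow>
     monoidal_hom_algebra sH mul one \<alpha> \<and> monoidal_hom_coalgebra sH \<Delta> \<epsilon> \<alpha> \<and>
     (\<forall>h g. tensor_eq2 sH sH (\<Delta> (mul h g))
        (concat (map (\<lambda>(a, b). map (\<lambda>(c, d). (mul a c, mul b d)) (\<Delta> g)) (\<Delta> h)))) \<and>
     tensor_eq2 sH sH (\<Delta> one) [(one, one)] \<and>
     (\<forall>h g. \<epsilon> (mul h g) = \<epsilon> h * \<epsilon> g) \<and> \<epsilon> one = 1 \<and>
     module_hom sH sH S \<and>
     (\<forall>h. sum_list (map (\<lambda>(a, b). mul (S a) b) (\<Delta> h)) = sH (\<epsilon> h) one) \<and>
     (\<forall>h. sum_list (map (\<lambda>(a, b). mul a (S b)) (\<Delta> h)) = sH (\<epsilon> h) one) \<and>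
     (\<forall>h. S (\<alpha> h) = \<alpha> (S h))"

definition right_hom_module ::
  "('k::comm_ring_1 \<Rightarrow> 'a::ab_group_add \<Rightarrow> 'a) \<Rightarrow> ('a \<Rightarrow> 'a \<Rightarrow> 'a) \<Rightarrow> 'a \<Rightarrow> ('a \<Rightarrow> 'a)
   \<Rightarrow> ('k \<Rightarrow> 'm::ab_group_add \<Rightarrow> 'm) \<Rightarrow> ('m \<Rightarrow> 'm) \<Rightarrow> ('m \<Rightarrow> 'a \<Rightarrow> 'm) \<Rightarrow> bool" where
  "right_hom_module sA mul one \<beta> sM \<mu> act \<longleftrightarrow>
     hom_object sM \<mu> \<and> k_bilinear sM sA sM act \<and>
     (\<forall>m a b. act (act m a) (\<beta> b) = act (\<mu> m) (mul a b)) \<and>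
     (\<forall>m. act m one = \<mu> m) \<and>
     (\<forall>m a. \<mu> (act m a) = act (\<mu> m) (\<beta> a))"

definition right_hom_comodule ::
  "('k::comm_ring_1 \<Rightarrow> 'h::ab_group_add \<Rightarrow> 'h) \<Rightarrow> ('h \<Rightarrow> ('h \<times> 'h) list) \<Rightarrow> ('h \<Rightarrow> 'k)
   \<Rightarrow> ('h \<Rightarrow> 'h) \<Rightarrow> ('k \<Rightarrow> 'm::ab_group_add \<Rightarrow> 'm) \<Rightarrow> ('m \<Rightarrow> 'm)
   \<Rightarrow> ('m \<Rightarrow> ('m \<times> 'h) list) \<Rightarrow> bool" where
  "right_hom_comodule sH \<Delta> \<epsilon> \<alpha> sM \<mu> \<rho> \<longleftrightarrow>
     hom_object sM \<mu> \<and>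
     (\<forall>x y. tensor_eq2 sM sH (\<rho> (x + y)) (\<rho> x @ \<rho> y)) \<and>
     (\<forall>r x. tensor_eq2 sM sH (\<rho> (sM r x)) (map (\<lambda>(a, b). (sM r a, b)) (\<rho> x))) \<and>
     (\<forall>m. tensor_eq3 sM sH sH
            (concat (map (\<lambda>(a, b). map (\<lambda>(x, y). (x, y, inv \<alpha> b)) (\<rho> a)) (\<rho> m)))
            (concat (map (\<lambda>(a, b). map (\<lambda>(x, y). (inv \<mu> a, x, y)) (\<Delta> b)) (\<rho> m)))) \<and>
     (\<forall>m. sum_list (map (\<lambda>(a, b). sM (\<epsilon> b) a) (\<rho> m)) = inv \<mu> m) \<and>
     (\<forall>m. tensor_eq2 sM sH (\<rho> (\<mu> m)) (map (\<lambda>(a, b). (\<mu> a, \<alpha> b)) (\<rho> m)))"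

definition right_hom_comodule_algebra ::
  "('k::comm_ring_1 \<Rightarrow> 'h::ab_group_add \<Rightarrow> 'h) \<Rightarrow> ('h \<Rightarrow> 'h \<Rightarrow> 'h) \<Rightarrow> 'h
   \<Rightarrow> ('h \<Rightarrow> ('h \<times> 'h) list) \<Rightarrow> ('h \<Rightarrow> 'k) \<Rightarrow> ('h \<Rightarrow> 'h)
   \<Rightarrow> ('k \<Rightarrow> 'a::ab_group_add \<Rightarrow> 'a) \<Rightarrow> ('a \<Rightarrow> 'a \<Rightarrow> 'a) \<Rightarrow> 'a \<Rightarrow> ('a \<Rightarrow> 'a)
   \<Rightarrow> ('a \<Rightarrow> ('a \<times> 'h) list) \<Rightarrow> bool" where
  "right_hom_comodule_algebra sH mulH oneH \<Delta> \<epsilon> \<alpha> sA mulA oneA \<beta> \<rho> \<longleftrightarrow>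
     monoidal_hom_algebra sA mulA oneA \<beta> \<and>
     right_hom_comodule sH \<Delta> \<epsilon> \<alpha> sA \<beta> \<rho> \<and>
     (\<forall>a b. tensor_eq2 sA sH (\<rho> (mulA a b))
        (concat (map (\<lambda>(x, u). map (\<lambda>(y, v). (mulA x y, mulH u v)) (\<rho> b)) (\<rho> a)))) \<and>
     tensor_eq2 sA sH (\<rho> oneA) [(oneA, oneH)]"

definition relative_hom_hopf_module ::
  "('k::comm_ring_1 \<Rightarrow> 'h::ab_group_add \<Rightarrow> 'h) \<Rightarrow> ('h \<Rightarrow> 'h \<Rightarrow> 'h)
   \<Rightarrow> ('h \<Rightarrow> ('h \<times> 'h) list) \<Rightarrow> ('h \<Rightarrow> 'k) \<Rightarrow> ('h \<Rightarrow> 'h)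
   \<Rightarrow> ('k \<Rightarrow> 'a::ab_group_add \<Rightarrow> 'a) \<Rightarrow> ('a \<Rightarrow> 'a \<Rightarrow> 'a) \<Rightarrow> 'a \<Rightarrow> ('a \<Rightarrow> 'a)
   \<Rightarrow> ('a \<Rightarrow> ('a \<times> 'h) list)
   \<Rightarrow> ('k \<Rightarrow> 'm::ab_group_add \<Rightarrow> 'm) \<Rightarrow> ('m \<Rightarrow> 'm) \<Rightarrow> ('m \<Rightarrow> 'a \<Rightarrow> 'm)
   \<Rightarrow> ('m \<Rightarrow> ('m \<times> 'h) list) \<Rightarrow> bool" where
  "relative_hom_hopf_module sH mulH \<Delta> \<epsilon> \<alpha> sA mulA oneA \<beta> \<rho>A sM \<mu> act \<rho>M \<longleftrightarrow>
     right_hom_module sA mulA oneA \<beta> sM \<mu> act \<and>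
     right_hom_comodule sH \<Delta> \<epsilon> \<alpha> sM \<mu> \<rho>M \<and>
     (\<forall>m a. tensor_eq2 sM sH (\<rho>M (act m a))
        (concat (map (\<lambda>(x, u). map (\<lambda>(y, v). (act x y, mulH u v)) (\<rho>A a)) (\<rho>M m))))"

definition total_integral ::
  "('k::comm_ring_1 \<Rightarrow> 'h::ab_group_add \<Rightarrow> 'h) \<Rightarrow> 'h \<Rightarrow> ('h \<Rightarrow> ('h \<times> 'h) list) \<Rightarrow> ('h \<Rightarrow> 'h)
   \<Rightarrow> ('k \<Rightarrow> 'a::ab_group_add \<Rightarrow> 'a) \<Rightarrow> 'a \<Rightarrow> ('a \<Rightarrow> 'a) \<Rightarrow> ('a \<Rightarrow> ('a \<times> 'h) list)
   \<Rightarrow> ('h \<Rightarrow> 'a) \<Rightarrow> bool" where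
  "total_integral sH oneH \<Delta> \<alpha> sA oneA \<beta> \<rho>A \<phi> \<longleftrightarrow>
     module_hom sH sA \<phi> \<and>
     (\<forall>h. tensor_eq2 sA sH (\<rho>A (\<phi> h)) (map (\<lambda>(a, b). (\<phi> a, b)) (\<Delta> h))) \<and>
     (\<forall>h. \<phi> (\<alpha> h) = \<beta> (\<phi> h)) \<and> \<phi> oneH = oneA"

definition coinvariants ::
  "('k::comm_ring_1 \<Rightarrow> 'm::ab_group_add \<Rightarrow> 'm) \<Rightarrow> ('k \<Rightarrow> 'h::ab_group_add \<Rightarrow> 'h) \<Rightarrow> 'h
   \<Rightarrow> ('m \<Rightarrow> 'm) \<Rightarrow> ('m \<Rightarrow> ('m \<times> 'h) list) \<Rightarrow> 'm set" where
  "coinvariants sM sH oneH \<mu> \<rho> = {m. tensor_eq2 sM sH (\<rho> m) [(inv \<mu> m, oneH)]}"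

text \<open>tau m = m_[0] . phi(S(m_[1])) (the map m (x) h \<mapsto> m . phi(S h) is bilinear, so this is
  the value of the induced linear map on rho(m)).\<close>
definition tau_map ::
  "('m \<Rightarrow> 'a \<Rightarrow> 'm::ab_group_add) \<Rightarrow> ('h \<Rightarrow> 'a) \<Rightarrow> ('h \<Rightarrow> 'h) \<Rightarrow> ('m \<Rightarrow> ('m \<times> 'h) list) \<Rightarrow> 'm \<Rightarrow> 'm" where
  "tau_map act \<phi> S \<rho> m = sum_list (map (\<lambda>(a, b). act a (\<phi> (S b))) (\<rho> m))"

definition center :: "('a \<Rightarrow> 'a \<Rightarrow> 'a) \<Rightarrow> 'a set" where
  "center mul = {z. \<forall>a. mul z a = mul a z}"

end

(*
  The averaging map tau m = m_[0] . phi(S m_[1]) is a retraction of M onto its coinvariants M0.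
  It fixes M0 because S 1 = 1 and phi 1 = 1.  Its image lies in M0 because the antipode is
  anti-comultiplicative, Delta(S h) = S h_(2) (x) S h_(1): both sides are convolution inverses
  of Delta.  Together with the colinearity of phi, this writes the coaction of tau m as
  m_[0][0] . phi(S m_[1](2)) (x) m_[0][1] S(m_[1](1)), and Hom-coassociativity of the coaction
  with h_(1) S(h_(2)) = eps(h) 1 collapses it to mu^-1(tau m) (x) 1.
  Linearity over the coinvariants C comes from the relative Hopf module condition, which gives
  rho(m c) = m_[0] beta^-1(c) (x) alpha(m_[1]) for c in C; for right linearity c has to pass
  phi(S m_[1]), which is where centrality of phi(H) is used.
*)

theory Submission
  imports Defs "HOL-Library.Multiset"
begin

section \<open>Congruences on formal sums of pure tensors\<close>

definition bilinear_upto ::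
  "('o list \<Rightarrow> 'o list \<Rightarrow> bool) \<Rightarrow> ('k::comm_ring_1 \<Rightarrow> 'm::ab_group_add \<Rightarrow> 'm)
   \<Rightarrow> ('k \<Rightarrow> 'n::ab_group_add \<Rightarrow> 'n) \<Rightarrow> ('m \<Rightarrow> 'n \<Rightarrow> 'o list) \<Rightarrow> bool" where
  "bilinear_upto R sM sN F \<longleftrightarrow>
     (\<forall>m m' n. R (F (m + m') n) (F m n @ F m' n)) \<and> (\<forall>m n n'. R (F m (n + n')) (F m n @ F m n')) \<and>
     (\<forall>n. R (F 0 n) []) \<and> (\<forall>m. R (F m 0) []) \<and> (\<forall>c m n. R (F (sM c m) n) (F m (sN c n)))"

definition trilinear_upto ::
  "('o list \<Rightarrow> 'o list \<Rightarrow> bool) \<Rightarrow> ('k::comm_ring_1 \<Rightarrow> 'm::ab_group_add \<Rightarrow> 'm)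
   \<Rightarrow> ('k \<Rightarrow> 'n::ab_group_add \<Rightarrow> 'n) \<Rightarrow> ('k \<Rightarrow> 'p::ab_group_add \<Rightarrow> 'p)
   \<Rightarrow> ('m \<Rightarrow> 'n \<Rightarrow> 'p \<Rightarrow> 'o list) \<Rightarrow> bool" where
  "trilinear_upto R sM sN sP F \<longleftrightarrow>
     (\<forall>p. bilinear_upto R sM sN (\<lambda>m n. F m n p)) \<and>
     (\<forall>m n p p'. R (F m n (p + p')) (F m n p @ F m n p')) \<and> (\<forall>m n. R (F m n 0) []) \<and>
     (\<forall>c m n p. R (F m (sN c n) p) (F m n (sP c p)))"

locale list_congruence =
  fixes R :: "'o list \<Rightarrow> 'o list \<Rightarrow> bool"
  assumes refl: "R xs xs"
    and sym: "R xs ys \<Longrightarrow> R ys xs"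
    and trans [trans]: "R xs ys \<Longrightarrow> R ys zs \<Longrightarrow> R xs zs"
    and congruence: "R xs ys \<Longrightarrow> R (us @ xs @ vs) (us @ ys @ vs)"
    and swap: "R [a, b] [b, a]"
begin

lemma of_eq: "xs = ys \<Longrightarrow> R xs ys"
  by (simp add: refl)

lemma append: "R xs xs' \<Longrightarrow> R ys ys' \<Longrightarrow> R (xs @ ys) (xs' @ ys')"
  using congruence[of xs xs' "[]" ys] congruence[of ys ys' xs' "[]"] trans by auto

lemma perm: "mset xs = mset ys \<Longrightarrow> R xs ys"
proof (induction xs arbitrary: ys)
  case Nil
  then show ?case by (simp add: refl)
next
  case (Cons a xs)
  have move_front: "R ([a] @ zs) (zs @ [a])" for zs
  proof (induction zs)
    case (Cons b zs)
    have "R ([] @ [a, b] @ zs) ([] @ [b, a] @ zs)" by (rule congruence[OF swap])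
    moreover have "R ([b] @ ([a] @ zs) @ []) ([b] @ (zs @ [a]) @ [])" by (rule congruence[OF Cons])
    ultimately show ?case using trans by auto
  qed (simp add: refl)
  from Cons.prems have "a \<in> set ys" by (metis list.set_intros(1) set_mset_mset)
  then obtain ys1 ys2 where ys: "ys = ys1 @ a # ys2" by (meson split_list)
  with Cons.prems Cons.IH have "R ([a] @ xs @ []) ([a] @ (ys1 @ ys2) @ [])"
    by (intro congruence) simp
  moreover have "R ([] @ ([a] @ ys1) @ ys2) ([] @ (ys1 @ [a]) @ ys2)"
    by (rule congruence[OF move_front])
  ultimately show ?case using ys trans by auto
qed

lemma concat_map: "(\<And>z. z \<in> set L \<Longrightarrow> R (F z) (G z)) \<Longrightarrow> R (concat (map F L)) (concat (map G L))"
  by (induction L) (auto simp: refl append)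

lemma concat_map_Nil: "(\<And>z. z \<in> set L \<Longrightarrow> R (F z) []) \<Longrightarrow> R (concat (map F L)) []"
proof (induction L)
  case (Cons a L)
  then show ?case using append[of "F a" "[]" "concat (map F L)" "[]"] by simp
qed (simp add: refl)

lemma concat_map_append: "R (concat (map (\<lambda>z. F z @ G z) L)) (concat (map F L) @ concat (map G L))"
  by (rule perm) (induction L, auto)

lemma additive_sum_list:
  assumes "\<And>x y. R (f (x + y)) (f x @ f y)" and "R (f 0) []"
  shows "R (f (sum_list (map g L))) (concat (map (\<lambda>z. f (g z)) L))"
proof (induction L)
  case (Cons a L)
  then show ?case using assms(1)[of "g a" "sum_list (map g L)"] append[OF refl Cons] trans by auto
qed (use assms(2) in simp)

lemma bilinear_upto_lift:
  assumes "bilinear_upto R sM sN F" and "tensor_eq2 sM sN xs ys"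
  shows "R (concat (map (\<lambda>(m, n). F m n) xs)) (concat (map (\<lambda>(m, n). F m n) ys))"
  using assms(2)
proof induction
  case (t2_swap a b)
  then show ?case by (cases a; cases b) (simp add: perm)
qed (use assms(1) in \<open>auto intro: refl sym trans simp: congruence bilinear_upto_def\<close>)

lemma trilinear_upto_lift:
  assumes "trilinear_upto R sM sN sP F" and "tensor_eq3 sM sN sP xs ys"
  shows "R (concat (map (\<lambda>(m, n, p). F m n p) xs)) (concat (map (\<lambda>(m, n, p). F m n p) ys))"
  using assms(2)
proof induction
  case (t3_swap a b)
  then show ?case by (cases a; cases b) (auto simp add: perm)
qed (use assms(1) in \<open>auto intro: refl sym trans simp: congruence trilinear_upto_def bilinear_upto_def\<close>)

end

interpretation tensor2: list_congruence "tensor_eq2 sM sN" for sM sN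
  by unfold_locales (auto intro: tensor_eq2.intros)

interpretation tensor3: list_congruence "tensor_eq3 sM sN sP" for sM sN sP
  by unfold_locales (auto intro: tensor_eq3.intros)

interpretation sum_list_eq: list_congruence "\<lambda>xs ys. sum_list xs = sum_list (ys :: 'a::ab_group_add list)"
  by unfold_locales (auto simp: add.commute)

lemma (in list_congruence) bilinear_upto_concat_map:
  assumes "\<And>z. z \<in> set L \<Longrightarrow> bilinear_upto R sM sN (\<lambda>m n. G m n z)"
  shows "bilinear_upto R sM sN (\<lambda>m n. concat (map (G m n) L))"
  unfolding bilinear_upto_def
proof (intro conjI allI)
  fix m m' n
  have "R (concat (map (G (m + m') n) L)) (concat (map (\<lambda>z. G m n z @ G m' n z) L))"
    by (rule concat_map) (use assms in \<open>simp add: bilinear_upto_def\<close>)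
  then show "R (concat (map (G (m + m') n) L)) (concat (map (G m n) L) @ concat (map (G m' n) L))"
    using trans concat_map_append by blast
next
  fix m n n'
  have "R (concat (map (G m (n + n')) L)) (concat (map (\<lambda>z. G m n z @ G m n' z) L))"
    by (rule concat_map) (use assms in \<open>simp add: bilinear_upto_def\<close>)
  then show "R (concat (map (G m (n + n')) L)) (concat (map (G m n) L) @ concat (map (G m n') L))"
    using trans concat_map_append by blast
qed (use assms in \<open>auto intro!: concat_map concat_map_Nil simp: bilinear_upto_def\<close>)

lemma bilinear_upto_pure_tensor:
  assumes "module_hom sM sX f" and "module_hom sN sY g"
  shows "bilinear_upto (tensor_eq2 sX sY) sM sN (\<lambda>m n. [(f m, g n)])"
  using assms by (simp add: bilinear_upto_def module_hom.add module_hom.zero module_hom.scale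
      t2_addl t2_addr t2_zerol t2_zeror t2_bal)

lemma bilinear_upto_pure_tensor_swap:
  assumes "module_hom sN sX f" and "module_hom sM sY g"
  shows "bilinear_upto (tensor_eq2 sX sY) sM sN (\<lambda>m n. [(f n, g m)])"
  using assms by (simp add: bilinear_upto_def module_hom.add module_hom.zero module_hom.scale
      t2_addl t2_addr t2_zerol t2_zeror tensor2.sym[OF t2_bal])

lemma map_as_concat: "map f xs = concat (map (\<lambda>x. [f x]) xs)"
  by (induction xs) auto

lemma tensor_eq2_map:
  assumes "module_hom sM sX f" and "module_hom sN sY g" and "tensor_eq2 sM sN xs ys"
  shows "tensor_eq2 sX sY (map (\<lambda>(m, n). (f m, g n)) xs) (map (\<lambda>(m, n). (f m, g n)) ys)"
  using tensor2.bilinear_upto_lift[OF bilinear_upto_pure_tensor[OF assms(1,2)] assms(3)]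
  by (simp add: map_as_concat[of "\<lambda>(m, n). (f m, g n)"] case_prod_unfold)

lemma tensor_eq2_map_swap:
  assumes "module_hom sN sX f" and "module_hom sM sY g" and "tensor_eq2 sM sN xs ys"
  shows "tensor_eq2 sX sY (map (\<lambda>(m, n). (f n, g m)) xs) (map (\<lambda>(m, n). (f n, g m)) ys)"
  using tensor2.bilinear_upto_lift[OF bilinear_upto_pure_tensor_swap[OF assms(1,2)] assms(3)]
  by (simp add: map_as_concat[of "\<lambda>(m, n). (f n, g m)"] case_prod_unfold)

lemma tensor_eq2_sum_list:
  assumes "\<And>n. module_hom sM sO (\<lambda>m. f m n)" and "\<And>m. module_hom sN sO (f m)"
    and "tensor_eq2 sM sN xs ys"
  shows "sum_list (map (\<lambda>(m, n). f m n) xs) = sum_list (map (\<lambda>(m, n). f m n) ys)"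
proof -
  have "bilinear_upto (\<lambda>xs ys. sum_list xs = sum_list ys) sM sN (\<lambda>m n. [f m n])"
    using module_hom.add[OF assms(1)] module_hom.add[OF assms(2)] module_hom.zero[OF assms(1)]
      module_hom.zero[OF assms(2)] module_hom.scale[OF assms(1)] module_hom.scale[OF assms(2)]
    by (simp add: bilinear_upto_def)
  from sum_list_eq.bilinear_upto_lift[OF this assms(3)] show ?thesis
    by (simp add: map_as_concat[of "\<lambda>(m, n). f m n"] case_prod_unfold)
qed

lemma tensor_eq2_collect_right: "tensor_eq2 sX sY (map (\<lambda>z. (P, Q z)) L) [(P, sum_list (map Q L))]"
proof (induction L)
  case (Cons a L)
  have "tensor_eq2 sX sY ([(P, Q a)] @ map (\<lambda>z. (P, Q z)) L) ([(P, Q a)] @ [(P, sum_list (map Q L))])"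
    by (rule tensor2.append[OF tensor2.refl Cons])
  also have "tensor_eq2 sX sY \<dots> [(P, Q a + sum_list (map Q L))]"
    using tensor2.sym[OF t2_addr] by simp
  finally show ?case by simp
qed (simp add: tensor2.sym[OF t2_zeror])

lemma tensor_eq2_collect_left: "tensor_eq2 sX sY (map (\<lambda>z. (P z, Q)) L) [(sum_list (map P L), Q)]"
proof (induction L)
  case (Cons a L)
  have "tensor_eq2 sX sY ([(P a, Q)] @ map (\<lambda>z. (P z, Q)) L) ([(P a, Q)] @ [(sum_list (map P L), Q)])"
    by (rule tensor2.append[OF tensor2.refl Cons])
  also have "tensor_eq2 sX sY \<dots> [(P a + sum_list (map P L), Q)]"
    using tensor2.sym[OF t2_addl] by simp
  finally show ?case by simp
qed (simp add: tensor2.sym[OF t2_zerol])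

lemma module_hom_sum_list:
  "module_hom s1 s2 f \<Longrightarrow> f (sum_list (map g L)) = sum_list (map (\<lambda>x. f (g x)) L)"
  by (induction L) (auto simp: module_hom.add module_hom.zero)

lemma sum_list_concat: "sum_list (concat xss) = sum_list (map sum_list xss)"
  by (induction xss) auto

lemma concat_concat: "concat (concat xss) = concat (map concat xss)"
  by (induction xss) auto

lemma (in module) scale_sum_list: "scale c (sum_list (map g L)) = sum_list (map (\<lambda>x. scale c (g x)) L)"
  by (induction L) (auto simp: scale_right_distrib)

lemma (in module) sum_list_scale: "scale (sum_list (map f L)) v = sum_list (map (\<lambda>x. scale (f x) v) L)"
  by (induction L) (auto simp: scale_left_distrib)

lemma hom_object_inv_module_hom: "hom_object s f \<Longrightarrow> module_hom s s (inv f)"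
  unfolding hom_object_def
  by (auto simp: module_hom_iff bij_is_surj bij_is_inj surj_f_inv_f intro!: Hilbert_Choice.inv_f_eq)

lemma hom_object_inv_simps:
  assumes "hom_object s f" shows "f (inv f x) = x" "inv f (f x) = x"
  using assms unfolding hom_object_def by (auto simp: bij_is_surj bij_is_inj surj_f_inv_f)

locale comodule_algebra_integral =
  fixes sH :: "'k::comm_ring_1 \<Rightarrow> 'h::ab_group_add \<Rightarrow> 'h"
    and mulH :: "'h \<Rightarrow> 'h \<Rightarrow> 'h" and oneH :: 'h
    and \<Delta> :: "'h \<Rightarrow> ('h \<times> 'h) list" and \<epsilon> :: "'h \<Rightarrow> 'k"
    and S :: "'h \<Rightarrow> 'h" and \<alpha> :: "'h \<Rightarrow> 'h"
    and sA :: "'k \<Rightarrow> 'a::ab_group_add \<Rightarrow> 'a"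
    and mulA :: "'a \<Rightarrow> 'a \<Rightarrow> 'a" and oneA :: 'a and \<beta> :: "'a \<Rightarrow> 'a"
    and \<rho>A :: "'a \<Rightarrow> ('a \<times> 'h) list"
    and \<phi> :: "'h \<Rightarrow> 'a"
  assumes H: "monoidal_hom_hopf sH mulH oneH \<Delta> \<epsilon> S \<alpha>"
    and A: "right_hom_comodule_algebra sH mulH oneH \<Delta> \<epsilon> \<alpha> sA mulA oneA \<beta> \<rho>A"
    and phi: "total_integral sH oneH \<Delta> \<alpha> sA oneA \<beta> \<rho>A \<phi>"
begin

abbreviation tensor_eqH (infix "\<approx>" 50) where "X \<approx> Y \<equiv> tensor_eq2 sH sH X Y"
abbreviation tensor_eqA (infix "\<approx>\<^sub>A" 50) where "X \<approx>\<^sub>A Y \<equiv> tensor_eq2 sA sH X Y"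

lemma H_algebra: "monoidal_hom_algebra sH mulH oneH \<alpha>"
  and H_coalgebra: "monoidal_hom_coalgebra sH \<Delta> \<epsilon> \<alpha>"
  using H unfolding monoidal_hom_hopf_def by blast+

lemma A_algebra: "monoidal_hom_algebra sA mulA oneA \<beta>"
  and A_comodule: "right_hom_comodule sH \<Delta> \<epsilon> \<alpha> sA \<beta> \<rho>A"
  using A unfolding right_hom_comodule_algebra_def by blast+

lemma hom_object_alpha: "hom_object sH \<alpha>"
  using H_algebra unfolding monoidal_hom_algebra_def by blast

lemma hom_object_beta: "hom_object sA \<beta>"
  using A_algebra unfolding monoidal_hom_algebra_def by blast

lemma module_H: "module sH" and alpha_hom: "module_hom sH sH \<alpha>"
  using hom_object_alpha unfolding hom_object_def by blast+

lemma mulH_hom_right: "module_hom sH sH (mulH a)" and mulH_hom_left: "module_hom sH sH (\<lambda>x. mulH x b)"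
  using H_algebra unfolding monoidal_hom_algebra_def k_bilinear_def by blast+

lemma mulA_hom_right: "module_hom sA sA (mulA a)"
  using A_algebra unfolding monoidal_hom_algebra_def k_bilinear_def by blast

lemma alpha_mult: "\<alpha> (mulH a b) = mulH (\<alpha> a) (\<alpha> b)" and alpha_one: "\<alpha> oneH = oneH"
  and mulH_assoc: "mulH (\<alpha> a) (mulH b c) = mulH (mulH a b) (\<alpha> c)"
  and mulH_one_right: "mulH a oneH = \<alpha> a" and mulH_one_left: "mulH oneH a = \<alpha> a"
  using H_algebra unfolding monoidal_hom_algebra_def by blast+

lemma mulA_assoc: "mulA (\<beta> a) (mulA b c) = mulA (mulA a b) (\<beta> c)"
  using A_algebra unfolding monoidal_hom_algebra_def by blast

lemma comult_add: "\<Delta> (x + y) \<approx> \<Delta> x @ \<Delta> y"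
  and comult_scale: "\<Delta> (sH r x) \<approx> map (\<lambda>(a, b). (sH r a, b)) (\<Delta> x)"
  and counit_hom: "module_hom sH (*) \<epsilon>"
  and comult_alpha: "\<Delta> (\<alpha> c) \<approx> map (\<lambda>(a, b). (\<alpha> a, \<alpha> b)) (\<Delta> c)"
  and counit_alpha: "\<epsilon> (\<alpha> c) = \<epsilon> c"
  and coassoc_inv: "tensor_eq3 sH sH sH
            (concat (map (\<lambda>(a, b). map (\<lambda>(x, y). (inv \<alpha> a, x, y)) (\<Delta> b)) (\<Delta> c)))
            (concat (map (\<lambda>(a, b). map (\<lambda>(x, y). (x, y, \<alpha> b)) (\<Delta> a)) (\<Delta> c)))"
  and counit_left_inv: "sum_list (map (\<lambda>(a, b). sH (\<epsilon> a) b) (\<Delta> c)) = inv \<alpha> c"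
  and counit_right_inv: "sum_list (map (\<lambda>(a, b). sH (\<epsilon> b) a) (\<Delta> c)) = inv \<alpha> c"
  using H_coalgebra unfolding monoidal_hom_coalgebra_def by blast+

lemma comult_mult: "\<Delta> (mulH h g) \<approx>
        concat (map (\<lambda>(a, b). map (\<lambda>(c, d). (mulH a c, mulH b d)) (\<Delta> g)) (\<Delta> h))"
  and comult_one: "\<Delta> oneH \<approx> [(oneH, oneH)]"
  and counit_one: "\<epsilon> oneH = 1"
  and antipode_hom: "module_hom sH sH S"
  and antipode_left: "sum_list (map (\<lambda>(a, b). mulH (S a) b) (\<Delta> h)) = sH (\<epsilon> h) oneH"
  and antipode_right: "sum_list (map (\<lambda>(a, b). mulH a (S b)) (\<Delta> h)) = sH (\<epsilon> h) oneH"
  and antipode_alpha: "S (\<alpha> h) = \<alpha> (S h)"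
  using H unfolding monoidal_hom_hopf_def by blast+

lemma coaction_mult: "\<rho>A (mulA a b) \<approx>\<^sub>A
        concat (map (\<lambda>(x, u). map (\<lambda>(y, v). (mulA x y, mulH u v)) (\<rho>A b)) (\<rho>A a))"
  using A unfolding right_hom_comodule_algebra_def by blast

lemma integral_hom: "module_hom sH sA \<phi>"
  and integral_colinear: "\<rho>A (\<phi> h) \<approx>\<^sub>A map (\<lambda>(a, b). (\<phi> a, b)) (\<Delta> h)"
  and integral_alpha: "\<phi> (\<alpha> h) = \<beta> (\<phi> h)" and integral_one: "\<phi> oneH = oneA"
  using phi unfolding total_integral_def by blast+

lemma inv_beta_simps: "\<beta> (inv \<beta> x) = x" "inv \<beta> (\<beta> x) = x"
  using hom_object_inv_simps[OF hom_object_beta] by auto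

lemmas alpha_linear = module_hom.add[OF alpha_hom] module_hom.scale[OF alpha_hom] module_hom.zero[OF alpha_hom]
lemmas antipode_linear = module_hom.add[OF antipode_hom] module_hom.scale[OF antipode_hom]
  module_hom.zero[OF antipode_hom]
lemmas mulH_linear_right = module_hom.add[OF mulH_hom_right] module_hom.scale[OF mulH_hom_right]
  module_hom.zero[OF mulH_hom_right]
lemmas mulH_linear_left = module_hom.add[OF mulH_hom_left] module_hom.scale[OF mulH_hom_left]
  module_hom.zero[OF mulH_hom_left]
lemmas counit_linear = module_hom.add[OF counit_hom] module_hom.scale[OF counit_hom] module_hom.zero[OF counit_hom]
lemmas scaleH_simps = module.scale_left_distrib[OF module_H] module.scale_right_distrib[OF module_H]
  module.scale_scale[OF module_H] module.scale_one[OF module_H] module.scale_zero_left[OF module_H]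
  module.scale_zero_right[OF module_H]

lemma counit_inv_alpha: "\<epsilon> (inv \<alpha> x) = \<epsilon> x"
  by (metis counit_alpha hom_object_inv_simps(1)[OF hom_object_alpha])

lemma counit_tensor_counit: "sum_list (map (\<lambda>(x, y). \<epsilon> x * \<epsilon> y) (\<Delta> a)) = \<epsilon> a"
proof -
  have "\<epsilon> (sum_list (map (\<lambda>(x, y). sH (\<epsilon> x) y) (\<Delta> a))) = \<epsilon> (inv \<alpha> a)"
    by (simp add: counit_left_inv)
  then show ?thesis
    by (simp add: module_hom_sum_list[OF counit_hom] case_prod_unfold counit_linear counit_inv_alpha)
qed

text \<open>The counit laws of the definition read \<open>\<epsilon>(c\<^sub>1) c\<^sub>2 = \<alpha>\<inverse>(c)\<close>, so applying
  \<open>\<epsilon> \<otimes> \<epsilon> \<otimes> id\<close> to Hom-coassociativity gives \<open>\<alpha>\<inverse>(\<alpha>\<inverse>(c)) = c\<close>: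
  the structure map of \<open>H\<close> is forced to be an involution.\<close>
lemma alpha_alpha: "\<alpha> (\<alpha> c) = c"
proof -
  let ?eval = "\<lambda>L. sum_list (map (\<lambda>(p, q, r). sH (\<epsilon> p * \<epsilon> q) r) L)"
  have "inv \<alpha> (inv \<alpha> c) = sum_list (map (\<lambda>(a, b). sH (\<epsilon> a) (sum_list (map (\<lambda>(x, y). sH (\<epsilon> x) y) (\<Delta> b)))) (\<Delta> c))"
    using module_hom_sum_list[OF hom_object_inv_module_hom[OF hom_object_alpha],
        of "\<lambda>(a, b). sH (\<epsilon> a) b" "\<Delta> c"]
    by (simp add: counit_left_inv[unfolded case_prod_unfold] case_prod_unfold
        module_hom.scale[OF hom_object_inv_module_hom[OF hom_object_alpha]])
  also have "\<dots> = ?eval (concat (map (\<lambda>(a, b). map (\<lambda>(x, y). (inv \<alpha> a, x, y)) (\<Delta> b)) (\<Delta> c)))"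
    by (simp add: sum_list_concat map_concat comp_def case_prod_unfold counit_inv_alpha
        scaleH_simps module.scale_sum_list[OF module_H])
  also have "\<dots> = ?eval (concat (map (\<lambda>(a, b). map (\<lambda>(x, y). (x, y, \<alpha> b)) (\<Delta> a)) (\<Delta> c)))"
  proof -
    have "trilinear_upto (\<lambda>xs ys. sum_list xs = sum_list ys) sH sH sH (\<lambda>p q r. [sH (\<epsilon> p * \<epsilon> q) r])"
      by (simp add: trilinear_upto_def bilinear_upto_def counit_linear scaleH_simps algebra_simps)
    from sum_list_eq.trilinear_upto_lift[OF this coassoc_inv] show ?thesis
      by (simp add: sum_list_concat comp_def case_prod_unfold)
  qed
  also have "\<dots> = sum_list (map (\<lambda>(a, b). sH (sum_list (map (\<lambda>(x, y). \<epsilon> x * \<epsilon> y) (\<Delta> a))) (\<alpha> b)) (\<Delta> c))"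
    by (simp add: sum_list_concat map_concat comp_def case_prod_unfold module.sum_list_scale[OF module_H])
  also have "\<dots> = c"
    using module_hom_sum_list[OF alpha_hom, of "\<lambda>(a, b). sH (\<epsilon> a) b" "\<Delta> c"]
    by (simp add: counit_tensor_counit[unfolded case_prod_unfold] counit_left_inv[unfolded case_prod_unfold] case_prod_unfold
        alpha_linear hom_object_inv_simps[OF hom_object_alpha])
  finally show ?thesis by (metis hom_object_inv_simps(1)[OF hom_object_alpha])
qed

lemma inv_alpha: "inv \<alpha> = \<alpha>"
  by (rule ext) (metis alpha_alpha hom_object_inv_simps(1)[OF hom_object_alpha])

lemma coassoc: "tensor_eq3 sH sH sH
            (concat (map (\<lambda>(a, b). map (\<lambda>(x, y). (\<alpha> a, x, y)) (\<Delta> b)) (\<Delta> c)))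
            (concat (map (\<lambda>(a, b). map (\<lambda>(x, y). (x, y, \<alpha> b)) (\<Delta> a)) (\<Delta> c)))"
  using coassoc_inv[of c] by (simp add: inv_alpha)

section \<open>The antipode is anti-comultiplicative\<close>

definition tensor_mult :: "('h \<times> 'h) list \<Rightarrow> ('h \<times> 'h) list \<Rightarrow> ('h \<times> 'h) list" where
  "tensor_mult X Y = concat (map (\<lambda>(a, b). map (\<lambda>(c, d). (mulH a c, mulH b d)) Y) X)"

definition tensor_alpha :: "('h \<times> 'h) list \<Rightarrow> ('h \<times> 'h) list" where
  "tensor_alpha X = map (\<lambda>(a, b). (\<alpha> a, \<alpha> b)) X"

definition tensor_scale :: "'k \<Rightarrow> ('h \<times> 'h) list \<Rightarrow> ('h \<times> 'h) list" where
  "tensor_scale c X = map (\<lambda>(a, b). (sH c a, b)) X"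

lemma tensor_mult_Nil [simp]: "tensor_mult [] Y = []" "tensor_mult X [] = []"
  by (induction X) (auto simp: tensor_mult_def)

lemma tensor_mult_single: "tensor_mult [(a, b)] Y = map (\<lambda>(c, d). (mulH a c, mulH b d)) Y"
  by (simp add: tensor_mult_def)

lemma tensor_mult_append_left: "tensor_mult (X @ X') Y = tensor_mult X Y @ tensor_mult X' Y"
  by (simp add: tensor_mult_def)

lemma tensor_mult_concat_left: "tensor_mult (concat (map F L)) Y = concat (map (\<lambda>z. tensor_mult (F z) Y) L)"
  by (induction L) (auto simp: tensor_mult_append_left)

lemma tensor_mult_append_right: "tensor_mult X (Y @ Y') \<approx> tensor_mult X Y @ tensor_mult X Y'"
proof (induction X)
  case (Cons x X)
  let ?f = "\<lambda>(c, d). (mulH (fst x) c, mulH (snd x) d)"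
  have unfold: "tensor_mult (x # X) Z = map ?f Z @ tensor_mult X Z" for Z
    by (simp add: tensor_mult_def case_prod_unfold)
  have "tensor_mult (x # X) (Y @ Y') \<approx> (map ?f Y @ map ?f Y') @ (tensor_mult X Y @ tensor_mult X Y')"
    unfolding unfold map_append by (rule tensor2.append[OF tensor2.refl Cons])
  also have "\<dots> \<approx> tensor_mult (x # X) Y @ tensor_mult (x # X) Y'"
    unfolding unfold by (rule tensor2.perm) simp
  finally show ?case .
qed (simp add: tensor2.refl)

lemma tensor_mult_concat_right:
  "tensor_mult X (concat (map F L)) \<approx> concat (map (\<lambda>z. tensor_mult X (F z)) L)"
proof (induction L)
  case (Cons a L)
  then show ?case
    using tensor_mult_append_right tensor2.append[OF tensor2.refl Cons] tensor2.trans by fastforce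
qed (simp add: tensor2.refl)

lemma tensor_mult_single_bilinear: "bilinear_upto (\<approx>) sH sH (\<lambda>a b. tensor_mult [(a, b)] Y)"
  unfolding tensor_mult_single map_as_concat[of "\<lambda>(c, d). (mulH _ c, mulH _ d)"]
  by (rule tensor2.bilinear_upto_concat_map)
    (auto simp: case_prod_unfold intro!: bilinear_upto_pure_tensor mulH_hom_left)

lemma tensor_mult_cong_left: "X \<approx> X' \<Longrightarrow> tensor_mult X Y \<approx> tensor_mult X' Y"
  using tensor2.bilinear_upto_lift[OF tensor_mult_single_bilinear]
  by (simp add: tensor_mult_def tensor_mult_single)

lemma tensor_mult_cong_right: "Y \<approx> Y' \<Longrightarrow> tensor_mult X Y \<approx> tensor_mult X Y'"
  unfolding tensor_mult_def
  by (rule tensor2.concat_map) (auto simp: tensor_eq2_map[OF mulH_hom_right mulH_hom_right])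

lemma tensor_mult_cong: "X \<approx> X' \<Longrightarrow> Y \<approx> Y' \<Longrightarrow> tensor_mult X Y \<approx> tensor_mult X' Y'"
  using tensor_mult_cong_left tensor_mult_cong_right tensor2.trans by blast

lemma tensor_mult_assoc: "tensor_mult (tensor_alpha X) (tensor_mult Y Z) = tensor_mult (tensor_mult X Y) (tensor_alpha Z)"
  by (simp add: tensor_mult_def tensor_alpha_def map_concat case_prod_unfold mulH_assoc comp_def concat_concat)

lemma tensor_mult_one_left: "tensor_mult [(oneH, oneH)] Y = tensor_alpha Y"
  by (simp add: tensor_mult_def tensor_alpha_def mulH_one_left)

lemma tensor_mult_one_right: "tensor_mult X [(oneH, oneH)] = tensor_alpha X"
  by (induction X) (auto simp: tensor_mult_def tensor_alpha_def mulH_one_right)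

lemma tensor_alpha_cong: "X \<approx> Y \<Longrightarrow> tensor_alpha X \<approx> tensor_alpha Y"
  unfolding tensor_alpha_def by (rule tensor_eq2_map[OF alpha_hom alpha_hom])

lemma tensor_alpha_alpha [simp]: "tensor_alpha (tensor_alpha X) = X"
  by (induction X) (auto simp: tensor_alpha_def alpha_alpha)

lemma tensor_scale_cong: "X \<approx> Y \<Longrightarrow> tensor_scale c X \<approx> tensor_scale c Y"
  unfolding tensor_scale_def
  by (rule tensor_eq2_map[OF module.module_hom_scale_self[OF module_H] module.module_hom_ident[OF module_H]])

lemma tensor_scale_mult_left: "tensor_mult (tensor_scale c X) Y = tensor_scale c (tensor_mult X Y)"
  by (simp add: tensor_mult_def tensor_scale_def map_concat case_prod_unfold mulH_linear_left comp_def)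

lemma tensor_scale_mult_right: "tensor_mult X (tensor_scale c Y) = tensor_scale c (tensor_mult X Y)"
  by (simp add: tensor_mult_def tensor_scale_def map_concat case_prod_unfold mulH_linear_right comp_def)

lemma tensor_scale_alpha: "tensor_scale c (tensor_alpha X) = tensor_alpha (tensor_scale c X)"
  by (simp add: tensor_scale_def tensor_alpha_def case_prod_unfold alpha_linear)

lemma tensor_scale_zero: "tensor_scale 0 X \<approx> []"
  unfolding tensor_scale_def map_as_concat[of "\<lambda>(a, b). (sH 0 a, b)"]
  by (rule tensor2.concat_map_Nil) (auto simp: scaleH_simps t2_zerol)

text \<open>Morphisms \<open>H \<rightarrow> H \<otimes> H\<close> of the Hom-category; under convolution they form a monoid
  with unit \<open>convolution_unit\<close>.\<close>
definition tensor_valued_hom :: "('h \<Rightarrow> ('h \<times> 'h) list) \<Rightarrow> bool" where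
  "tensor_valued_hom f \<longleftrightarrow> (\<forall>x y. f (x + y) \<approx> f x @ f y) \<and> (\<forall>c x. f (sH c x) \<approx> tensor_scale c (f x))
     \<and> (\<forall>x. f (\<alpha> x) \<approx> tensor_alpha (f x))"

lemma tensor_valued_hom_add: "tensor_valued_hom f \<Longrightarrow> f (x + y) \<approx> f x @ f y"
  and tensor_valued_hom_scale: "tensor_valued_hom f \<Longrightarrow> f (sH c x) \<approx> tensor_scale c (f x)"
  and tensor_valued_hom_alpha: "tensor_valued_hom f \<Longrightarrow> f (\<alpha> x) \<approx> tensor_alpha (f x)"
  by (simp_all add: tensor_valued_hom_def)

lemma tensor_valued_hom_zero: "tensor_valued_hom f \<Longrightarrow> f 0 \<approx> []"
  using tensor2.trans[OF tensor_valued_hom_scale[of f 0 0] tensor_scale_zero[of "f 0"]]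
  by (simp add: scaleH_simps)

lemma tensor_valued_hom_sum_list:
  "tensor_valued_hom f \<Longrightarrow> f (sum_list (map g L)) \<approx> concat (map (\<lambda>z. f (g z)) L)"
  by (rule tensor2.additive_sum_list) (auto simp: tensor_valued_hom_add tensor_valued_hom_zero)

lemma tensor_valued_hom_comp_alpha:
  assumes "tensor_valued_hom g" shows "tensor_valued_hom (\<lambda>z. g (\<alpha> z))"
  unfolding tensor_valued_hom_def
proof (intro conjI allI)
  fix x
  have "tensor_alpha (g (\<alpha> x)) \<approx> tensor_alpha (tensor_alpha (g x))"
    by (rule tensor_alpha_cong[OF tensor_valued_hom_alpha[OF assms]])
  then show "g (\<alpha> (\<alpha> x)) \<approx> tensor_alpha (g (\<alpha> x))" by (simp add: alpha_alpha tensor2.sym)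
qed (use assms in \<open>simp_all add: tensor_valued_hom_add tensor_valued_hom_scale alpha_linear\<close>)

lemma tensor_valued_hom_comult: "tensor_valued_hom \<Delta>"
  unfolding tensor_valued_hom_def tensor_scale_def tensor_alpha_def
  using comult_add comult_scale comult_alpha by blast

definition convolution :: "('h \<Rightarrow> ('h \<times> 'h) list) \<Rightarrow> ('h \<Rightarrow> ('h \<times> 'h) list) \<Rightarrow> 'h \<Rightarrow> ('h \<times> 'h) list" where
  "convolution f g h = concat (map (\<lambda>(a, b). tensor_mult (f a) (g b)) (\<Delta> h))"

definition convolution_unit :: "'h \<Rightarrow> ('h \<times> 'h) list" where
  "convolution_unit h = [(sH (\<epsilon> h) oneH, oneH)]"

lemma convolution_unit_eq: "convolution_unit h = tensor_scale (\<epsilon> h) [(oneH, oneH)]"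
  by (simp add: convolution_unit_def tensor_scale_def)

lemma convolution_cong:
  "(\<And>x. f x \<approx> f' x) \<Longrightarrow> (\<And>x. g x \<approx> g' x) \<Longrightarrow> convolution f g h \<approx> convolution f' g' h"
  unfolding convolution_def by (rule tensor2.concat_map) (auto simp: tensor_mult_cong)

text \<open>Both unit laws reduce, via \<open>\<alpha>\<close>-equivariance of \<open>f\<close>, to the counit law
  \<open>\<alpha> (\<epsilon>(h\<^sub>1) h\<^sub>2) = h\<close>.\<close>
lemma convolution_unit_right:
  assumes f: "tensor_valued_hom f" shows "convolution f convolution_unit h \<approx> f h"
proof -
  have "convolution f convolution_unit h
      = concat (map (\<lambda>(a, b). tensor_alpha (tensor_scale (\<epsilon> b) (f a))) (\<Delta> h))"
    unfolding convolution_def convolution_unit_eq tensor_scale_mult_right tensor_mult_one_right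
      tensor_scale_alpha ..
  also have "\<dots> \<approx> concat (map (\<lambda>(a, b). f (\<alpha> (sH (\<epsilon> b) a))) (\<Delta> h))"
  proof (rule tensor2.concat_map, clarify)
    fix a b
    show "tensor_alpha (tensor_scale (\<epsilon> b) (f a)) \<approx> f (\<alpha> (sH (\<epsilon> b) a))"
      using tensor_valued_hom_alpha[OF f] tensor_alpha_cong[OF tensor_valued_hom_scale[OF f]]
      by (blast intro: tensor2.sym tensor2.trans)
  qed
  also have "\<dots> \<approx> f (sum_list (map (\<lambda>(a, b). \<alpha> (sH (\<epsilon> b) a)) (\<Delta> h)))"
    using tensor2.sym[OF tensor_valued_hom_sum_list[OF f, of "\<lambda>(a, b). \<alpha> (sH (\<epsilon> b) a)" "\<Delta> h"]]
    by (simp add: case_prod_unfold)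
  also have "sum_list (map (\<lambda>(a, b). \<alpha> (sH (\<epsilon> b) a)) (\<Delta> h)) = h"
    using module_hom_sum_list[OF alpha_hom, of "\<lambda>(a, b). sH (\<epsilon> b) a" "\<Delta> h"] counit_right_inv[of h]
    by (simp add: case_prod_unfold inv_alpha alpha_alpha)
  finally show ?thesis .
qed

lemma convolution_unit_left:
  assumes g: "tensor_valued_hom g" shows "convolution convolution_unit g h \<approx> g h"
proof -
  have "convolution convolution_unit g h
      = concat (map (\<lambda>(a, b). tensor_alpha (tensor_scale (\<epsilon> a) (g b))) (\<Delta> h))"
    unfolding convolution_def convolution_unit_eq tensor_scale_mult_left tensor_mult_one_left
      tensor_scale_alpha ..
  also have "\<dots> \<approx> concat (map (\<lambda>(a, b). g (\<alpha> (sH (\<epsilon> a) b))) (\<Delta> h))"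
  proof (rule tensor2.concat_map, clarify)
    fix a b
    show "tensor_alpha (tensor_scale (\<epsilon> a) (g b)) \<approx> g (\<alpha> (sH (\<epsilon> a) b))"
      using tensor_valued_hom_alpha[OF g] tensor_alpha_cong[OF tensor_valued_hom_scale[OF g]]
      by (blast intro: tensor2.sym tensor2.trans)
  qed
  also have "\<dots> \<approx> g (sum_list (map (\<lambda>(a, b). \<alpha> (sH (\<epsilon> a) b)) (\<Delta> h)))"
    using tensor2.sym[OF tensor_valued_hom_sum_list[OF g, of "\<lambda>(a, b). \<alpha> (sH (\<epsilon> a) b)" "\<Delta> h"]]
    by (simp add: case_prod_unfold)
  also have "sum_list (map (\<lambda>(a, b). \<alpha> (sH (\<epsilon> a) b)) (\<Delta> h)) = h"
    using module_hom_sum_list[OF alpha_hom, of "\<lambda>(a, b). sH (\<epsilon> a) b" "\<Delta> h"] counit_left_inv[of h]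
    by (simp add: case_prod_unfold inv_alpha alpha_alpha)
  finally show ?thesis .
qed

lemma tensor_mult_hom_left:
  assumes f: "tensor_valued_hom f"
  shows "tensor_mult (f (x + x')) Y \<approx> tensor_mult (f x) Y @ tensor_mult (f x') Y"
    and "tensor_mult (f 0) Y \<approx> []"
    and "tensor_mult (f (sH c x)) Y \<approx> tensor_scale c (tensor_mult (f x) Y)"
  using tensor_mult_cong_left[OF tensor_valued_hom_add[OF f]]
    tensor_mult_cong_left[OF tensor_valued_hom_zero[OF f]]
    tensor_mult_cong_left[OF tensor_valued_hom_scale[OF f]]
  by (simp_all add: tensor_mult_append_left tensor_scale_mult_left)

lemma tensor_mult_hom_right:
  assumes g: "tensor_valued_hom g"
  shows "tensor_mult X (g (y + y')) \<approx> tensor_mult X (g y) @ tensor_mult X (g y')"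
    and "tensor_mult X (g 0) \<approx> []"
    and "tensor_mult X (g (sH c y)) \<approx> tensor_scale c (tensor_mult X (g y))"
  using tensor2.trans[OF tensor_mult_cong_right[OF tensor_valued_hom_add[OF g]] tensor_mult_append_right]
    tensor_mult_cong_right[OF tensor_valued_hom_zero[OF g]]
    tensor_mult_cong_right[OF tensor_valued_hom_scale[OF g]]
  by (simp_all add: tensor_scale_mult_right)

lemma tensor_mult_triple_trilinear:
  assumes f: "tensor_valued_hom f" and g: "tensor_valued_hom g" and k: "tensor_valued_hom k"
  shows "trilinear_upto (\<approx>) sH sH sH (\<lambda>x y z. tensor_mult (f x) (tensor_mult (g y) (k z)))"
proof -
  note inner = tensor_mult_cong_right[where X = "f x" for x]
  have scale_out: "tensor_mult (f x) (tensor_scale c Z) = tensor_scale c (tensor_mult (f x) Z)" for x c Z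
    by (rule tensor_scale_mult_right)
  let ?T = "\<lambda>c x y z. tensor_scale c (tensor_mult (f x) (tensor_mult (g y) (k z)))"
  have scale1: "tensor_mult (f (sH c x)) (tensor_mult (g y) (k z)) \<approx> ?T c x y z" for c x y z
    by (rule tensor_mult_hom_left(3)[OF f])
  have scale2: "tensor_mult (f x) (tensor_mult (g (sH c y)) (k z)) \<approx> ?T c x y z" for c x y z
    using inner[OF tensor_mult_hom_left(3)[OF g]] by (simp add: scale_out)
  have scale3: "tensor_mult (f x) (tensor_mult (g y) (k (sH c z))) \<approx> ?T c x y z" for c x y z
    using inner[OF tensor_mult_hom_right(3)[OF k]] by (simp add: scale_out)
  show ?thesis
    unfolding trilinear_upto_def bilinear_upto_def
    using tensor_mult_hom_left(1,2)[OF f]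
      tensor2.trans[OF inner[OF tensor_mult_hom_left(1)[OF g]] tensor_mult_append_right]
      tensor2.trans[OF inner[OF tensor_mult_hom_right(1)[OF k]] tensor_mult_append_right]
      inner[OF tensor_mult_hom_left(2)[OF g]] inner[OF tensor_mult_hom_right(2)[OF k]]
      tensor2.trans[OF scale1 tensor2.sym[OF scale2]] tensor2.trans[OF scale2 tensor2.sym[OF scale3]]
    by simp
qed

text \<open>Hom-associativity \<open>\<alpha>(a)(bc) = (ab)\<alpha>(c)\<close> in \<open>H \<otimes> H\<close> matches Hom-coassociativity
  \<open>\<alpha>(h\<^sub>1) \<otimes> h\<^sub>2\<^sub>1 \<otimes> h\<^sub>2\<^sub>2 = h\<^sub>1\<^sub>1 \<otimes> h\<^sub>1\<^sub>2 \<otimes> \<alpha>(h\<^sub>2)\<close>; the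
  \<open>\<alpha>\<close>-equivariance of the factors absorbs the two twists.\<close>
lemma convolution_assoc:
  assumes f: "tensor_valued_hom f" and g: "tensor_valued_hom g" and k: "tensor_valued_hom k"
  shows "convolution f (convolution g k) h \<approx> convolution (convolution f g) k h"
proof -
  define \<Phi> where "\<Phi> = (\<lambda>x y z. tensor_mult (f (\<alpha> x)) (tensor_mult (g y) (k z)))"
  have "convolution f (convolution g k) h
      \<approx> concat (map (\<lambda>(a, b). concat (map (\<lambda>(c, d). tensor_mult (f a) (tensor_mult (g c) (k d))) (\<Delta> b))) (\<Delta> h))"
    unfolding convolution_def
    by (rule tensor2.concat_map) (auto simp: case_prod_unfold intro: tensor_mult_concat_right)
  also have "\<dots> = concat (map (\<lambda>(x, y, z). \<Phi> x y z)
      (concat (map (\<lambda>(a, b). map (\<lambda>(x, y). (\<alpha> a, x, y)) (\<Delta> b)) (\<Delta> h))))"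
    by (simp add: \<Phi>_def map_concat concat_concat comp_def case_prod_unfold alpha_alpha)
  also have "\<dots> \<approx> concat (map (\<lambda>(x, y, z). \<Phi> x y z)
      (concat (map (\<lambda>(a, b). map (\<lambda>(x, y). (x, y, \<alpha> b)) (\<Delta> a)) (\<Delta> h))))"
    unfolding \<Phi>_def
    by (rule tensor2.trilinear_upto_lift[OF tensor_mult_triple_trilinear[OF tensor_valued_hom_comp_alpha[OF f] g k]
          coassoc])
  also have "\<dots> = concat (map (\<lambda>(a, b). concat (map (\<lambda>(x, y).
      tensor_mult (f (\<alpha> x)) (tensor_mult (g y) (k (\<alpha> b)))) (\<Delta> a))) (\<Delta> h))"
    by (simp add: \<Phi>_def map_concat concat_concat comp_def case_prod_unfold)
  also have "\<dots> \<approx> concat (map (\<lambda>(a, b). concat (map (\<lambda>(x, y).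
      tensor_mult (tensor_alpha (f x)) (tensor_mult (g y) (tensor_alpha (k b)))) (\<Delta> a))) (\<Delta> h))"
    by (intro tensor2.concat_map)
      (auto simp: case_prod_unfold
        intro!: tensor2.concat_map tensor_mult_cong tensor_mult_cong_right tensor_valued_hom_alpha f k)
  also have "\<dots> = convolution (convolution f g) k h"
    by (simp add: convolution_def tensor_mult_concat_left case_prod_unfold tensor_mult_assoc)
  finally show ?thesis .
qed

definition antipode_flip :: "('h \<times> 'h) list \<Rightarrow> ('h \<times> 'h) list" where
  "antipode_flip X = map (\<lambda>(a, b). (S b, S a)) X"

lemma antipode_flip_cong: "X \<approx> Y \<Longrightarrow> antipode_flip X \<approx> antipode_flip Y"
  unfolding antipode_flip_def by (rule tensor_eq2_map_swap[OF antipode_hom antipode_hom])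

lemma antipode_flip_scale: "antipode_flip (tensor_scale c X) \<approx> tensor_scale c (antipode_flip X)"
proof (induction X)
  case (Cons x X)
  obtain a b where x: "x = (a, b)" by (cases x)
  have "[(S b, S (sH c a))] @ antipode_flip (tensor_scale c X) \<approx> [(sH c (S b), S a)] @ tensor_scale c (antipode_flip X)"
    by (rule tensor2.append[OF _ Cons]) (simp add: antipode_linear tensor2.sym[OF t2_bal])
  then show ?case by (simp add: x antipode_flip_def tensor_scale_def)
qed (simp add: antipode_flip_def tensor_scale_def tensor2.refl)

lemma tensor_valued_hom_antipode_flip: "tensor_valued_hom (\<lambda>h. antipode_flip (\<Delta> h))"
  unfolding tensor_valued_hom_def
proof (intro conjI allI)
  fix x y show "antipode_flip (\<Delta> (x + y)) \<approx> antipode_flip (\<Delta> x) @ antipode_flip (\<Delta> y)"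
    using antipode_flip_cong[OF comult_add] by (simp add: antipode_flip_def)
next
  fix c x show "antipode_flip (\<Delta> (sH c x)) \<approx> tensor_scale c (antipode_flip (\<Delta> x))"
    using tensor2.trans[OF antipode_flip_cong[OF tensor_valued_hom_scale[OF tensor_valued_hom_comult]]
        antipode_flip_scale] .
next
  fix x show "antipode_flip (\<Delta> (\<alpha> x)) \<approx> tensor_alpha (antipode_flip (\<Delta> x))"
    using antipode_flip_cong[OF tensor_valued_hom_alpha[OF tensor_valued_hom_comult]]
    by (simp add: antipode_flip_def tensor_alpha_def case_prod_unfold comp_def antipode_alpha)
qed

lemma tensor_valued_hom_comult_antipode: "tensor_valued_hom (\<lambda>h. \<Delta> (S h))"
  using tensor_valued_hom_comult unfolding tensor_valued_hom_def by (simp add: antipode_linear antipode_alpha)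

lemma convolution_comult_antipode_comult: "convolution (\<lambda>h. \<Delta> (S h)) \<Delta> h \<approx> convolution_unit h"
proof -
  have "convolution (\<lambda>h. \<Delta> (S h)) \<Delta> h \<approx> concat (map (\<lambda>(a, b). \<Delta> (mulH (S a) b)) (\<Delta> h))"
    unfolding convolution_def
    by (rule tensor2.concat_map) (auto simp: tensor_mult_def intro: tensor2.sym[OF comult_mult])
  also have "\<dots> \<approx> \<Delta> (sum_list (map (\<lambda>(a, b). mulH (S a) b) (\<Delta> h)))"
    using tensor2.sym[OF tensor_valued_hom_sum_list[OF tensor_valued_hom_comult,
          of "\<lambda>(a, b). mulH (S a) b" "\<Delta> h"]]
    by (simp add: case_prod_unfold)
  also have "\<dots> \<approx> tensor_scale (\<epsilon> h) (\<Delta> oneH)"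
    unfolding antipode_left by (rule tensor_valued_hom_scale[OF tensor_valued_hom_comult])
  also have "\<dots> \<approx> convolution_unit h"
    unfolding convolution_unit_eq by (rule tensor_scale_cong[OF comult_one])
  finally show ?thesis .
qed

lemma tensor_mult_single_trilinear:
  assumes g: "tensor_valued_hom g"
  shows "trilinear_upto (\<approx>) sH sH sH (\<lambda>x y z. tensor_mult [(x, y)] (g z))"
proof -
  have "tensor_mult [(x, sH c y)] (g z) \<approx> tensor_mult [(x, y)] (g (sH c z))" for c x y z
  proof -
    have "tensor_mult [(x, sH c y)] (g z) \<approx> tensor_mult [(sH c x, y)] (g z)"
      using tensor_mult_single_bilinear unfolding bilinear_upto_def by (blast intro: tensor2.sym)
    also have "tensor_mult [(sH c x, y)] (g z) = tensor_scale c (tensor_mult [(x, y)] (g z))"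
      using tensor_scale_mult_left[of c "[(x, y)]" "g z"] by (simp add: tensor_scale_def)
    finally show ?thesis using tensor2.sym[OF tensor_mult_hom_right(3)[OF g]] by (rule tensor2.trans)
  qed
  then show ?thesis
    unfolding trilinear_upto_def using tensor_mult_single_bilinear tensor_mult_hom_right[OF g] by blast
qed

lemma tensor_antipode_right: "map (\<lambda>(x, y). (Q, \<alpha> (mulH x (S y)))) (\<Delta> a) \<approx> [(Q, sH (\<epsilon> a) oneH)]"
proof -
  have "sum_list (map (\<lambda>(x, y). \<alpha> (mulH x (S y))) (\<Delta> a)) = sH (\<epsilon> a) oneH"
    using module_hom_sum_list[OF alpha_hom, of "\<lambda>(x, y). mulH x (S y)" "\<Delta> a"] antipode_right[of a]
    by (simp add: case_prod_unfold alpha_linear alpha_one)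
  then show ?thesis
    using tensor_eq2_collect_right[of sH sH Q "\<lambda>w. \<alpha> (mulH (fst w) (S (snd w)))" "\<Delta> a"]
    by (simp add: case_prod_unfold)
qed

text \<open>In Sweedler notation: \<open>P b\<^sub>1 \<otimes> S(b\<^sub>2\<^sub>2) \<otimes> S(b\<^sub>2\<^sub>1)\<close>
  collapses, by coassociativity and the antipode law \<open>b\<^sub>1 S(b\<^sub>2) = \<epsilon>(b) 1\<close>, to
  \<open>P S(\<alpha> b) \<otimes> 1\<close>.\<close>
lemma antipode_flip_absorb:
  "concat (map (\<lambda>(x, y). tensor_mult [(P, x)] (antipode_flip (\<Delta> (\<alpha> y)))) (\<Delta> b))
     \<approx> [(mulH P (S (\<alpha> b)), oneH)]"
proof -
  define W where "W = (\<lambda>u p q. [(mulH P (S (\<alpha> q)), mulH (\<alpha> u) (S (\<alpha> p)))])"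
  have W_trilinear: "trilinear_upto (\<approx>) sH sH sH W"
    by (simp add: trilinear_upto_def bilinear_upto_def W_def alpha_linear antipode_linear mulH_linear_right
        mulH_linear_left t2_addl t2_addr t2_zerol t2_zeror tensor2.refl tensor2.sym[OF t2_bal])
  have "concat (map (\<lambda>(x, y). tensor_mult [(P, x)] (antipode_flip (\<Delta> (\<alpha> y)))) (\<Delta> b))
     \<approx> concat (map (\<lambda>(x, y). tensor_mult [(P, x)] (tensor_alpha (antipode_flip (\<Delta> y)))) (\<Delta> b))"
    by (rule tensor2.concat_map)
      (auto intro: tensor_mult_cong_right[OF tensor_valued_hom_alpha[OF tensor_valued_hom_antipode_flip]])
  also have "\<dots> = concat (map (\<lambda>(u, p, q). W u p q)
      (concat (map (\<lambda>(a, b). map (\<lambda>(x, y). (\<alpha> a, x, y)) (\<Delta> b)) (\<Delta> b))))"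
    by (simp add: W_def tensor_mult_single antipode_flip_def tensor_alpha_def map_concat concat_concat
        comp_def case_prod_unfold alpha_alpha antipode_alpha)
  also have "\<dots> \<approx> concat (map (\<lambda>(u, p, q). W u p q)
      (concat (map (\<lambda>(a, b). map (\<lambda>(x, y). (x, y, \<alpha> b)) (\<Delta> a)) (\<Delta> b))))"
    by (rule tensor2.trilinear_upto_lift[OF W_trilinear coassoc])
  also have "\<dots> = concat (map (\<lambda>(a, b). map (\<lambda>(x, y). (mulH P (S b), \<alpha> (mulH x (S y)))) (\<Delta> a)) (\<Delta> b))"
    by (simp add: W_def map_concat concat_concat comp_def case_prod_unfold alpha_alpha antipode_alpha alpha_mult)
  also have "\<dots> \<approx> map (\<lambda>(a, b). (mulH P (S (sH (\<epsilon> a) b)), oneH)) (\<Delta> b)"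
    unfolding map_as_concat[of "\<lambda>(a, b). (mulH P (S (sH (\<epsilon> a) b)), oneH)"]
  proof (rule tensor2.concat_map, clarify)
    fix a b
    have "map (\<lambda>(x, y). (mulH P (S b), \<alpha> (mulH x (S y)))) (\<Delta> a) \<approx> [(mulH P (S b), sH (\<epsilon> a) oneH)]"
      by (rule tensor_antipode_right)
    also have "\<dots> \<approx> [(mulH P (S (sH (\<epsilon> a) b)), oneH)]"
      using tensor2.sym[OF t2_bal[of sH sH "\<epsilon> a" "mulH P (S b)" oneH]]
      by (simp add: antipode_linear mulH_linear_right)
    finally show "map (\<lambda>(x, y). (mulH P (S b), \<alpha> (mulH x (S y)))) (\<Delta> a)
        \<approx> [(mulH P (S (sH (\<epsilon> a) b)), oneH)]" .
  qed
  also have "\<dots> \<approx> [(sum_list (map (\<lambda>(a, b). mulH P (S (sH (\<epsilon> a) b))) (\<Delta> b)), oneH)]"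
    using tensor_eq2_collect_left[of sH sH "\<lambda>w. mulH P (S (sH (\<epsilon> (fst w)) (snd w)))" oneH "\<Delta> b"]
    by (simp add: case_prod_unfold)
  also have "sum_list (map (\<lambda>(a, b). mulH P (S (sH (\<epsilon> a) b))) (\<Delta> b)) = mulH P (S (\<alpha> b))"
    using module_hom_sum_list[OF module_hom_compose[OF antipode_hom mulH_hom_right, of P],
        of "\<lambda>(a, b). sH (\<epsilon> a) b" "\<Delta> b"] counit_left_inv[of b]
    by (simp add: case_prod_unfold inv_alpha comp_def)
  finally show ?thesis .
qed

lemma convolution_comult_antipode_flip: "convolution \<Delta> (\<lambda>h. antipode_flip (\<Delta> h)) h \<approx> convolution_unit h"
proof -
  have "convolution \<Delta> (\<lambda>h. antipode_flip (\<Delta> h)) h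
      \<approx> concat (map (\<lambda>(x, y, z). tensor_mult [(x, y)] (antipode_flip (\<Delta> (\<alpha> z))))
          (concat (map (\<lambda>(a, b). map (\<lambda>(x, y). (x, y, \<alpha> b)) (\<Delta> a)) (\<Delta> h))))"
    by (intro tensor2.of_eq) (simp add: convolution_def tensor_mult_def map_concat concat_concat comp_def case_prod_unfold alpha_alpha)
  also have "\<dots> \<approx> concat (map (\<lambda>(x, y, z). tensor_mult [(x, y)] (antipode_flip (\<Delta> (\<alpha> z))))
          (concat (map (\<lambda>(a, b). map (\<lambda>(x, y). (\<alpha> a, x, y)) (\<Delta> b)) (\<Delta> h))))"
    by (rule tensor2.trilinear_upto_lift[OF tensor_mult_single_trilinear[OF
          tensor_valued_hom_comp_alpha[OF tensor_valued_hom_antipode_flip]] tensor3.sym[OF coassoc]])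
  also have "\<dots> = concat (map (\<lambda>(a, b). concat (map (\<lambda>(x, y).
      tensor_mult [(\<alpha> a, x)] (antipode_flip (\<Delta> (\<alpha> y)))) (\<Delta> b))) (\<Delta> h))"
    by (simp add: map_concat concat_concat comp_def case_prod_unfold)
  also have "\<dots> \<approx> map (\<lambda>(a, b). (mulH (\<alpha> a) (S (\<alpha> b)), oneH)) (\<Delta> h)"
    unfolding map_as_concat[of "\<lambda>(a, b). (mulH (\<alpha> a) (S (\<alpha> b)), oneH)"]
    by (rule tensor2.concat_map) (auto intro: antipode_flip_absorb)
  also have "\<dots> \<approx> [(sum_list (map (\<lambda>(a, b). mulH (\<alpha> a) (S (\<alpha> b))) (\<Delta> h)), oneH)]"
    using tensor_eq2_collect_left[of sH sH "\<lambda>w. mulH (\<alpha> (fst w)) (S (\<alpha> (snd w)))" oneH "\<Delta> h"]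
    by (simp add: case_prod_unfold)
  also have "sum_list (map (\<lambda>(a, b). mulH (\<alpha> a) (S (\<alpha> b))) (\<Delta> h)) = sH (\<epsilon> h) oneH"
    using module_hom_sum_list[OF alpha_hom, of "\<lambda>(a, b). mulH a (S b)" "\<Delta> h"] antipode_right[of h]
    by (simp add: case_prod_unfold alpha_linear alpha_one alpha_mult antipode_alpha)
  finally show ?thesis by (simp add: convolution_unit_def)
qed

text \<open>\<open>\<Delta> \<circ> S\<close> is a left and \<open>(S \<otimes> S) \<circ> \<Delta>\<^sup>c\<^sup>o\<^sup>p\<close> a right convolution inverse of
  \<open>\<Delta>\<close>, so they agree.\<close>
lemma comult_antipode: "\<Delta> (S h) \<approx> antipode_flip (\<Delta> h)"
proof -
  have "\<Delta> (S h) \<approx> convolution (\<lambda>h. \<Delta> (S h)) convolution_unit h"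
    by (rule tensor2.sym[OF convolution_unit_right[OF tensor_valued_hom_comult_antipode]])
  also have "\<dots> \<approx> convolution (\<lambda>h. \<Delta> (S h)) (convolution \<Delta> (\<lambda>h. antipode_flip (\<Delta> h))) h"
    by (rule convolution_cong) (auto intro: tensor2.refl tensor2.sym[OF convolution_comult_antipode_flip])
  also have "\<dots> \<approx> convolution (convolution (\<lambda>h. \<Delta> (S h)) \<Delta>) (\<lambda>h. antipode_flip (\<Delta> h)) h"
    by (rule convolution_assoc[OF tensor_valued_hom_comult_antipode tensor_valued_hom_comult
          tensor_valued_hom_antipode_flip])
  also have "\<dots> \<approx> convolution convolution_unit (\<lambda>h. antipode_flip (\<Delta> h)) h"
    by (rule convolution_cong) (auto intro: tensor2.refl convolution_comult_antipode_comult)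
  also have "\<dots> \<approx> antipode_flip (\<Delta> h)"
    by (rule convolution_unit_left[OF tensor_valued_hom_antipode_flip])
  finally show ?thesis .
qed

lemma antipode_one: "S oneH = oneH"
proof -
  have "sum_list (map (\<lambda>(a, b). mulH (S a) b) (\<Delta> oneH)) = sum_list (map (\<lambda>(a, b). mulH (S a) b) [(oneH, oneH)])"
    by (rule tensor_eq2_sum_list[OF _ _ comult_one])
      (auto intro: module_hom_compose[OF antipode_hom mulH_hom_left, unfolded comp_def] mulH_hom_right)
  then have "\<alpha> (S oneH) = oneH"
    using antipode_left[of oneH] by (simp add: counit_one scaleH_simps mulH_one_right)
  then show ?thesis by (metis alpha_alpha alpha_one)
qed

lemma coaction_integral_antipode: "\<rho>A (\<phi> (S h)) \<approx>\<^sub>A map (\<lambda>(a, b). (\<phi> (S b), S a)) (\<Delta> h)"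
proof -
  have "\<rho>A (\<phi> (S h)) \<approx>\<^sub>A map (\<lambda>(a, b). (\<phi> a, b)) (\<Delta> (S h))" by (rule integral_colinear)
  also have "\<dots> \<approx>\<^sub>A map (\<lambda>(a, b). (\<phi> a, b)) (antipode_flip (\<Delta> h))"
    using tensor_eq2_map[OF integral_hom module.module_hom_ident[OF module_H] comult_antipode] by simp
  finally show ?thesis by (simp add: antipode_flip_def case_prod_unfold comp_def)
qed

end

section \<open>The retraction \<open>\<tau>\<close> onto the coinvariants\<close>

locale relative_module_integral = comodule_algebra_integral sH mulH oneH \<Delta> \<epsilon> S \<alpha> sA mulA oneA \<beta> \<rho>A \<phi>
  for sH :: "'k::comm_ring_1 \<Rightarrow> 'h::ab_group_add \<Rightarrow> 'h"
    and mulH :: "'h \<Rightarrow> 'h \<Rightarrow> 'h" and oneH :: 'h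
    and \<Delta> :: "'h \<Rightarrow> ('h \<times> 'h) list" and \<epsilon> :: "'h \<Rightarrow> 'k"
    and S :: "'h \<Rightarrow> 'h" and \<alpha> :: "'h \<Rightarrow> 'h"
    and sA :: "'k \<Rightarrow> 'a::ab_group_add \<Rightarrow> 'a"
    and mulA :: "'a \<Rightarrow> 'a \<Rightarrow> 'a" and oneA :: 'a and \<beta> :: "'a \<Rightarrow> 'a"
    and \<rho>A :: "'a \<Rightarrow> ('a \<times> 'h) list"
    and \<phi> :: "'h \<Rightarrow> 'a" +
  fixes sM :: "'k \<Rightarrow> 'm::ab_group_add \<Rightarrow> 'm" and \<mu> :: "'m \<Rightarrow> 'm"
    and act :: "'m \<Rightarrow> 'a \<Rightarrow> 'm" and \<rho>M :: "'m \<Rightarrow> ('m \<times> 'h) list"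
  assumes M: "relative_hom_hopf_module sH mulH \<Delta> \<epsilon> \<alpha> sA mulA oneA \<beta> \<rho>A sM \<mu> act \<rho>M"
begin

abbreviation tensor_eqM (infix "\<approx>\<^sub>M" 50) where "X \<approx>\<^sub>M Y \<equiv> tensor_eq2 sM sH X Y"
abbreviation M0 where "M0 \<equiv> coinvariants sM sH oneH \<mu> \<rho>M"
abbreviation \<tau> where "\<tau> \<equiv> tau_map act \<phi> S \<rho>M"

lemma M_module: "right_hom_module sA mulA oneA \<beta> sM \<mu> act"
  and M_comodule: "right_hom_comodule sH \<Delta> \<epsilon> \<alpha> sM \<mu> \<rho>M"
  and coaction_act: "\<rho>M (act m a) \<approx>\<^sub>M
        concat (map (\<lambda>(x, u). map (\<lambda>(y, v). (act x y, mulH u v)) (\<rho>A a)) (\<rho>M m))"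
  using M unfolding relative_hom_hopf_module_def by blast+

lemma hom_object_mu: "hom_object sM \<mu>"
  using M_module unfolding right_hom_module_def by blast

lemma module_M: "module sM" and mu_hom: "module_hom sM sM \<mu>"
  using hom_object_mu unfolding hom_object_def by blast+

lemma act_hom_right: "module_hom sA sM (act m)" and act_hom_left: "module_hom sM sM (\<lambda>x. act x a)"
  using M_module unfolding right_hom_module_def k_bilinear_def by blast+

lemma act_assoc: "act (act m a) (\<beta> b) = act (\<mu> m) (mulA a b)"
  and act_one: "act m oneA = \<mu> m" and mu_act: "\<mu> (act m a) = act (\<mu> m) (\<beta> a)"
  using M_module unfolding right_hom_module_def by blast+

lemma coactionM_add: "\<rho>M (x + y) \<approx>\<^sub>M \<rho>M x @ \<rho>M y"
  and coactionM_scale: "\<rho>M (sM r x) \<approx>\<^sub>M map (\<lambda>(a, b). (sM r a, b)) (\<rho>M x)"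
  and coactionM_coassoc_inv: "tensor_eq3 sM sH sH
            (concat (map (\<lambda>(a, b). map (\<lambda>(x, y). (x, y, inv \<alpha> b)) (\<rho>M a)) (\<rho>M m)))
            (concat (map (\<lambda>(a, b). map (\<lambda>(x, y). (inv \<mu> a, x, y)) (\<Delta> b)) (\<rho>M m)))"
  and coactionM_mu: "\<rho>M (\<mu> m) \<approx>\<^sub>M map (\<lambda>(a, b). (\<mu> a, \<alpha> b)) (\<rho>M m)"
  using M_comodule unfolding right_hom_comodule_def by blast+

lemma coactionM_coassoc: "tensor_eq3 sM sH sH
            (concat (map (\<lambda>(a, b). map (\<lambda>(x, y). (x, y, \<alpha> b)) (\<rho>M a)) (\<rho>M m)))
            (concat (map (\<lambda>(a, b). map (\<lambda>(x, y). (inv \<mu> a, x, y)) (\<Delta> b)) (\<rho>M m)))"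
  using coactionM_coassoc_inv by (simp add: inv_alpha)

lemma inv_mu_simps: "\<mu> (inv \<mu> x) = x" "inv \<mu> (\<mu> x) = x"
  using hom_object_inv_simps[OF hom_object_mu] by auto

lemma inv_mu_hom: "module_hom sM sM (inv \<mu>)"
  by (rule hom_object_inv_module_hom[OF hom_object_mu])

lemma inv_mu_act: "inv \<mu> (act m a) = act (inv \<mu> m) (inv \<beta> a)"
  by (metis inv_mu_simps mu_act inv_beta_simps(1))

lemma coactionM_zero: "\<rho>M 0 \<approx>\<^sub>M []"
proof -
  have "\<rho>M (sM 0 0) \<approx>\<^sub>M map (\<lambda>(a, b). (sM 0 a, b)) (\<rho>M 0)" by (rule coactionM_scale)
  also have "\<dots> \<approx>\<^sub>M []"
    unfolding map_as_concat[of "\<lambda>(a, b). (sM 0 a, b)"]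
    by (rule tensor2.concat_map_Nil) (auto simp: module.scale_zero_left[OF module_M] t2_zerol)
  finally show ?thesis by (simp add: module.scale_zero_left[OF module_M])
qed

definition tensor_act :: "('m \<times> 'h) list \<Rightarrow> ('a \<times> 'h) list \<Rightarrow> ('m \<times> 'h) list" where
  "tensor_act X Y = concat (map (\<lambda>(x, u). map (\<lambda>(y, v). (act x y, mulH u v)) Y) X)"

lemma tensor_act_cong_right: "Y \<approx>\<^sub>A Y' \<Longrightarrow> tensor_act X Y \<approx>\<^sub>M tensor_act X Y'"
  unfolding tensor_act_def
  by (rule tensor2.concat_map) (auto simp: tensor_eq2_map[OF act_hom_right mulH_hom_right])

lemma tensor_act_cong_left: "X \<approx>\<^sub>M X' \<Longrightarrow> tensor_act X Y \<approx>\<^sub>M tensor_act X' Y"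
proof -
  have "bilinear_upto (\<approx>\<^sub>M) sM sH (\<lambda>x u. map (\<lambda>(y, v). (act x y, mulH u v)) Y)"
    unfolding map_as_concat[of "\<lambda>(y, v). (act _ y, mulH _ v)"]
    by (rule tensor2.bilinear_upto_concat_map)
      (auto simp: case_prod_unfold intro!: bilinear_upto_pure_tensor act_hom_left mulH_hom_left)
  then show "X \<approx>\<^sub>M X' \<Longrightarrow> tensor_act X Y \<approx>\<^sub>M tensor_act X' Y"
    unfolding tensor_act_def using tensor2.bilinear_upto_lift by fastforce
qed

lemma tau_map_eq: "tau_map act \<phi> S \<rho> m = sum_list (map (\<lambda>(a, b). act a (\<phi> (S b))) (\<rho> m))"
  by (simp add: tau_map_def)

lemma act_integral_antipode_hom: "module_hom sH sM (\<lambda>q. act x (\<phi> (S q)))"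
  by (rule module_hom_compose[OF module_hom_compose[OF antipode_hom integral_hom] act_hom_right,
        unfolded comp_def])

text \<open>\<open>\<tau>\<close> is well defined: \<open>m \<otimes> h \<mapsto> m \<cdot> \<phi>(S h)\<close> is bilinear.\<close>
lemma sum_act_integral_antipode_cong:
  "X \<approx>\<^sub>M Y \<Longrightarrow> sum_list (map (\<lambda>(a, b). act a (\<phi> (S b))) X) = sum_list (map (\<lambda>(a, b). act a (\<phi> (S b))) Y)"
  by (rule tensor_eq2_sum_list[OF act_hom_left act_integral_antipode_hom])

lemma coinvariants_iff: "m \<in> M0 \<longleftrightarrow> \<rho>M m \<approx>\<^sub>M [(inv \<mu> m, oneH)]"
  by (simp add: coinvariants_def)

lemma tau_coinvariant: "m \<in> M0 \<Longrightarrow> \<tau> m = m"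
  unfolding coinvariants_iff tau_map_eq
  by (drule sum_act_integral_antipode_cong) (simp add: antipode_one integral_one act_one inv_mu_simps)

lemma coinvariants_act:
  assumes m: "m \<in> M0" and c: "c \<in> coinvariants sA sH oneH \<beta> \<rho>A"
  shows "act m c \<in> M0"
proof -
  have "\<rho>M (act m c) \<approx>\<^sub>M tensor_act (\<rho>M m) (\<rho>A c)" unfolding tensor_act_def by (rule coaction_act)
  also have "\<dots> \<approx>\<^sub>M tensor_act [(inv \<mu> m, oneH)] [(inv \<beta> c, oneH)]"
    using tensor_act_cong_left[OF m[unfolded coinvariants_iff]] tensor_act_cong_right c
    unfolding coinvariants_def using tensor2.trans by blast
  also have "tensor_act [(inv \<mu> m, oneH)] [(inv \<beta> c, oneH)] = [(inv \<mu> (act m c), oneH)]"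
    by (simp add: tensor_act_def inv_mu_act mulH_one_right alpha_one)
  finally show ?thesis unfolding coinvariants_iff .
qed

lemma coinvariants_mu: "m \<in> M0 \<Longrightarrow> \<mu> m \<in> M0"
  using tensor2.trans[OF coactionM_mu tensor_eq2_map[OF mu_hom alpha_hom, of "\<rho>M m" "[(inv \<mu> m, oneH)]"]]
  by (simp add: coinvariants_iff inv_mu_simps alpha_one)

lemma coaction_inv_mu: "\<rho>M (inv \<mu> m) \<approx>\<^sub>M map (\<lambda>(a, b). (inv \<mu> a, \<alpha> b)) (\<rho>M m)"
proof -
  have "map (\<lambda>(a, b). (inv \<mu> a, \<alpha> b)) (map (\<lambda>(a, b). (\<mu> a, \<alpha> b)) X) = X" for X
    by (induction X) (auto simp: inv_mu_simps alpha_alpha)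
  with tensor_eq2_map[OF inv_mu_hom alpha_hom coactionM_mu[of "inv \<mu> m"]] show ?thesis
    by (simp add: inv_mu_simps tensor2.sym)
qed

lemma coinvariants_inv_mu: "m \<in> M0 \<Longrightarrow> inv \<mu> m \<in> M0"
  using tensor2.trans[OF coaction_inv_mu tensor_eq2_map[OF inv_mu_hom alpha_hom, of "\<rho>M m" "[(inv \<mu> m, oneH)]"]]
  by (simp add: coinvariants_iff alpha_one)

lemma mu_image_coinvariants: "\<mu> ` M0 = M0"
proof
  show "\<mu> ` M0 \<subseteq> M0" using coinvariants_mu by blast
  show "M0 \<subseteq> \<mu> ` M0"
    by (metis coinvariants_inv_mu image_eqI inv_mu_simps(1) subsetI)
qed

lemma tau_module_hom: "module_hom sM sM \<tau>"
  unfolding module_hom_iff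
proof (intro conjI allI module_M)
  fix x y show "\<tau> (x + y) = \<tau> x + \<tau> y"
    unfolding tau_map_eq using sum_act_integral_antipode_cong[OF coactionM_add[of x y]] by simp
next
  fix c x
  have "\<tau> (sM c x) = sum_list (map (\<lambda>(a, b). act a (\<phi> (S b))) (map (\<lambda>(a, b). (sM c a, b)) (\<rho>M x)))"
    unfolding tau_map_eq using sum_act_integral_antipode_cong[OF coactionM_scale] by simp
  also have "\<dots> = sM c (\<tau> x)"
    unfolding tau_map_eq
    by (simp add: module.scale_sum_list[OF module_M] case_prod_unfold module_hom.scale[OF act_hom_left] comp_def)
  finally show "\<tau> (sM c x) = sM c (\<tau> x)" .
qed

lemma tau_mu: "\<tau> (\<mu> m) = \<mu> (\<tau> m)"
proof -
  have "\<tau> (\<mu> m) = sum_list (map (\<lambda>(a, b). act a (\<phi> (S b))) (map (\<lambda>(a, b). (\<mu> a, \<alpha> b)) (\<rho>M m)))"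
    unfolding tau_map_eq using sum_act_integral_antipode_cong[OF coactionM_mu] by simp
  also have "\<dots> = \<mu> (\<tau> m)"
    unfolding tau_map_eq
    by (simp add: module_hom_sum_list[OF mu_hom] case_prod_unfold mu_act antipode_alpha integral_alpha comp_def)
  finally show ?thesis .
qed

definition tau_summand_coaction :: "'m \<Rightarrow> 'h \<Rightarrow> 'h \<Rightarrow> ('m \<times> 'h) list" where
  "tau_summand_coaction x u w = map (\<lambda>(p, q). (act x (\<phi> (S q)), mulH u (S p))) (\<Delta> (\<alpha> w))"

lemma tau_summand_coaction_trilinear: "trilinear_upto (\<approx>\<^sub>M) sM sH sH tau_summand_coaction"
  unfolding trilinear_upto_def
proof (intro conjI allI)
  fix w show "bilinear_upto (\<approx>\<^sub>M) sM sH (\<lambda>x u. tau_summand_coaction x u w)"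
    unfolding tau_summand_coaction_def map_as_concat[of "\<lambda>(p, q). (act _ (\<phi> (S q)), mulH _ (S p))"]
    by (rule tensor2.bilinear_upto_concat_map)
      (auto simp: case_prod_unfold intro!: bilinear_upto_pure_tensor act_hom_left mulH_hom_left)
next
  have summand_cong: "X \<approx> Y \<Longrightarrow> map (\<lambda>(p, q). (act x (\<phi> (S q)), mulH u (S p))) X
      \<approx>\<^sub>M map (\<lambda>(p, q). (act x (\<phi> (S q)), mulH u (S p))) Y" for X Y x u
    by (rule tensor_eq2_map_swap[OF act_integral_antipode_hom
          module_hom_compose[OF antipode_hom mulH_hom_right, unfolded comp_def]])
  fix x u w w'
  show "tau_summand_coaction x u (w + w') \<approx>\<^sub>M tau_summand_coaction x u w @ tau_summand_coaction x u w'"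
    unfolding tau_summand_coaction_def alpha_linear using summand_cong[OF comult_add] by simp
  show "tau_summand_coaction x u 0 \<approx>\<^sub>M []"
    unfolding tau_summand_coaction_def alpha_linear
    using summand_cong[OF tensor_valued_hom_zero[OF tensor_valued_hom_comult]] by simp
  fix c
  have "tau_summand_coaction x u (sH c w) \<approx>\<^sub>M
      map (\<lambda>(p, q). (act x (\<phi> (S q)), mulH u (S p))) (tensor_scale c (\<Delta> (\<alpha> w)))"
    unfolding tau_summand_coaction_def alpha_linear
    by (rule summand_cong[OF tensor_valued_hom_scale[OF tensor_valued_hom_comult]])
  also have "map (\<lambda>(p, q). (act x (\<phi> (S q)), mulH u (S p))) (tensor_scale c (\<Delta> (\<alpha> w)))
      = tau_summand_coaction x (sH c u) w"
    by (simp add: tau_summand_coaction_def tensor_scale_def case_prod_unfold antipode_linear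
        mulH_linear_right mulH_linear_left)
  finally show "tau_summand_coaction x (sH c u) w \<approx>\<^sub>M tau_summand_coaction x u (sH c w)"
    by (rule tensor2.sym)
qed

lemma tau_summand_coaction_collapse:
  "concat (map (\<lambda>(p, q). tau_summand_coaction y p q) (\<Delta> z)) \<approx>\<^sub>M [(act y (\<phi> (S (\<alpha> z))), oneH)]"
proof -
  define F where "F = (\<lambda>(c::'h, d::'h). (act y (\<phi> (\<alpha> c)), d))"
  have F_hom: "module_hom sH sM (\<lambda>c. act y (\<phi> (\<alpha> c)))"
    by (rule module_hom_compose[OF module_hom_compose[OF alpha_hom integral_hom] act_hom_right,
          unfolded comp_def])
  have "concat (map (\<lambda>(p, q). tau_summand_coaction y p q) (\<Delta> z))
      = map F (concat (map (\<lambda>(p, q). tensor_mult [(oneH, p)] (antipode_flip (\<Delta> (\<alpha> q)))) (\<Delta> z)))"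
    by (simp add: tau_summand_coaction_def F_def tensor_mult_single antipode_flip_def map_concat comp_def
        case_prod_unfold mulH_one_left alpha_alpha)
  also have "\<dots> \<approx>\<^sub>M map F [(mulH oneH (S (\<alpha> z)), oneH)]"
    unfolding F_def
    by (rule tensor_eq2_map[OF F_hom module.module_hom_ident[OF module_H] antipode_flip_absorb])
  also have "map F [(mulH oneH (S (\<alpha> z)), oneH)] = [(act y (\<phi> (S (\<alpha> z))), oneH)]"
    by (simp add: F_def mulH_one_left alpha_alpha)
  finally show ?thesis .
qed

text \<open>Writing \<open>\<rho>(m) = m\<^sub>0 \<otimes> m\<^sub>1\<close>, the coaction of \<open>\<tau> m = m\<^sub>0 \<phi>(S m\<^sub>1)\<close>
  is \<open>m\<^sub>0\<^sub>0 \<phi>(S m\<^sub>1)\<^sub>0 \<otimes> m\<^sub>0\<^sub>1 \<phi>(S m\<^sub>1)\<^sub>1\<close>; by colinearity of \<open>\<phi>\<close>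
  and anti-comultiplicativity of \<open>S\<close>, coassociativity brings it into the form that
  \<open>tau_summand_coaction_collapse\<close> reduces to \<open>\<mu>\<^sup>-\<^sup>1(\<tau> m) \<otimes> 1\<close>.\<close>
lemma tau_in_coinvariants: "\<tau> m \<in> M0"
proof -
  let ?g = "\<lambda>w. act (fst w) (\<phi> (S (snd w)))"
  have "\<rho>M (\<tau> m) \<approx>\<^sub>M concat (map (\<lambda>w. \<rho>M (?g w)) (\<rho>M m))"
    unfolding tau_map_eq case_prod_unfold
    by (rule tensor2.additive_sum_list[OF coactionM_add coactionM_zero])
  also have "\<dots> \<approx>\<^sub>M concat (map (\<lambda>w. tensor_act (\<rho>M (fst w)) (\<rho>A (\<phi> (S (snd w))))) (\<rho>M m))"
    by (rule tensor2.concat_map) (simp add: tensor_act_def coaction_act)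
  also have "\<dots> \<approx>\<^sub>M concat (map (\<lambda>w. tensor_act (\<rho>M (fst w))
      (map (\<lambda>(a, b). (\<phi> (S b), S a)) (\<Delta> (snd w)))) (\<rho>M m))"
    by (rule tensor2.concat_map) (rule tensor_act_cong_right[OF coaction_integral_antipode])
  also have "\<dots> = concat (map (\<lambda>(x, u, w). tau_summand_coaction x u w)
      (concat (map (\<lambda>(a, b). map (\<lambda>(x, y). (x, y, \<alpha> b)) (\<rho>M a)) (\<rho>M m))))"
    by (simp add: tensor_act_def tau_summand_coaction_def map_concat concat_concat comp_def
        case_prod_unfold alpha_alpha)
  also have "\<dots> \<approx>\<^sub>M concat (map (\<lambda>(x, u, w). tau_summand_coaction x u w)
      (concat (map (\<lambda>(a, b). map (\<lambda>(x, y). (inv \<mu> a, x, y)) (\<Delta> b)) (\<rho>M m))))"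
    by (rule tensor2.trilinear_upto_lift[OF tau_summand_coaction_trilinear coactionM_coassoc])
  also have "\<dots> = concat (map (\<lambda>(y, z). concat (map (\<lambda>(p, q). tau_summand_coaction (inv \<mu> y) p q) (\<Delta> z)))
      (\<rho>M m))"
    by (simp add: map_concat concat_concat comp_def case_prod_unfold)
  also have "\<dots> \<approx>\<^sub>M map (\<lambda>(y, z). (act (inv \<mu> y) (\<phi> (S (\<alpha> z))), oneH)) (\<rho>M m)"
    unfolding map_as_concat[of "\<lambda>(y, z). (act (inv \<mu> y) (\<phi> (S (\<alpha> z))), oneH)"]
    by (rule tensor2.concat_map) (auto intro: tau_summand_coaction_collapse)
  also have "\<dots> \<approx>\<^sub>M [(inv \<mu> (\<tau> m), oneH)]"
  proof -
    have "inv \<beta> (\<phi> x) = \<phi> (\<alpha> x)" for x by (metis inv_beta_simps(2) integral_alpha alpha_alpha)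
    then have "inv \<mu> (\<tau> m) = sum_list (map (\<lambda>(y, z). act (inv \<mu> y) (\<phi> (S (\<alpha> z)))) (\<rho>M m))"
      unfolding tau_map_eq using module_hom_sum_list[OF inv_mu_hom, of ?g "\<rho>M m"]
      by (simp add: case_prod_unfold inv_mu_act antipode_alpha)
    then show ?thesis
      using tensor_eq2_collect_left[of sM sH "\<lambda>w. act (inv \<mu> (fst w)) (\<phi> (S (\<alpha> (snd w))))" oneH "\<rho>M m"]
      by (simp add: case_prod_unfold)
  qed
  finally show ?thesis unfolding coinvariants_iff .
qed

lemma tau_act_coinvariant:
  assumes central: "range \<phi> \<subseteq> center mulA" and c: "c \<in> coinvariants sA sH oneH \<beta> \<rho>A"
  shows "\<tau> (act m c) = act (\<tau> m) c"
proof -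
  have "\<tau> (act m c) = sum_list (map (\<lambda>(a, b). act a (\<phi> (S b))) (tensor_act (\<rho>M m) (\<rho>A c)))"
    unfolding tau_map_eq tensor_act_def by (rule sum_act_integral_antipode_cong[OF coaction_act])
  also have "\<dots> = sum_list (map (\<lambda>(a, b). act a (\<phi> (S b))) (tensor_act (\<rho>M m) [(inv \<beta> c, oneH)]))"
    using c unfolding coinvariants_def by (auto intro!: sum_act_integral_antipode_cong tensor_act_cong_right)
  also have "\<dots> = sum_list (map (\<lambda>(x, u). act (act x (\<phi> (S u))) c) (\<rho>M m))"
  proof -
    have "act (act x (inv \<beta> c)) (\<phi> (S (mulH u oneH))) = act (act x (\<phi> (S u))) c" for x u
    proof -
      have "\<phi> (S u) \<in> center mulA" using central by blast
      then have "mulA (inv \<beta> c) (\<phi> (S u)) = mulA (\<phi> (S u)) (inv \<beta> c)"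
        unfolding center_def by simp
      then have "act (act x (inv \<beta> c)) (\<beta> (\<phi> (S u))) = act (\<mu> x) (mulA (\<phi> (S u)) (inv \<beta> c))"
        by (simp add: act_assoc)
      also have "\<dots> = act (act x (\<phi> (S u))) c" by (simp add: act_assoc[symmetric] inv_beta_simps)
      finally show ?thesis by (simp add: mulH_one_right antipode_alpha integral_alpha)
    qed
    then show ?thesis by (simp add: tensor_act_def case_prod_unfold comp_def)
  qed
  also have "\<dots> = act (\<tau> m) c"
    unfolding tau_map_eq using module_hom_sum_list[OF act_hom_left, of "\<lambda>(x, u). act x (\<phi> (S u))" "\<rho>M m" c]
    by (simp add: case_prod_unfold)
  finally show ?thesis .
qed

end

lemma (in comodule_algebra_integral) relative_hom_hopf_module_self:
  "relative_hom_hopf_module sH mulH \<Delta> \<epsilon> \<alpha> sA mulA oneA \<beta> \<rho>A sA \<beta> mulA \<rho>A"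
  using hom_object_beta A_algebra A_comodule coaction_mult
  unfolding relative_hom_hopf_module_def right_hom_module_def monoidal_hom_algebra_def
  by (auto simp: mulA_assoc)

sublocale comodule_algebra_integral \<subseteq> self: relative_module_integral
  sH mulH oneH \<Delta> \<epsilon> S \<alpha> sA mulA oneA \<beta> \<rho>A \<phi> sA \<beta> mulA \<rho>A
  by unfold_locales (rule relative_hom_hopf_module_self)

context comodule_algebra_integral
begin

lemma tau_left_linear:
  assumes c: "c \<in> coinvariants sA sH oneH \<beta> \<rho>A"
  shows "tau_map mulA \<phi> S \<rho>A (mulA c b) = mulA c (tau_map mulA \<phi> S \<rho>A b)"
proof -
  have "tau_map mulA \<phi> S \<rho>A (mulA c b)
      = sum_list (map (\<lambda>(a, b). mulA a (\<phi> (S b))) (self.tensor_act (\<rho>A c) (\<rho>A b)))"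
    unfolding self.tau_map_eq self.tensor_act_def by (rule self.sum_act_integral_antipode_cong[OF coaction_mult])
  also have "\<dots> = sum_list (map (\<lambda>(a, b). mulA a (\<phi> (S b))) (self.tensor_act [(inv \<beta> c, oneH)] (\<rho>A b)))"
    using c unfolding coinvariants_def
    by (auto intro!: self.sum_act_integral_antipode_cong self.tensor_act_cong_left)
  also have "\<dots> = sum_list (map (\<lambda>(y, v). mulA c (mulA y (\<phi> (S v)))) (\<rho>A b))"
  proof -
    have "mulA (mulA (inv \<beta> c) y) (\<phi> (S (mulH oneH v))) = mulA c (mulA y (\<phi> (S v)))" for y v
      by (simp add: mulH_one_left antipode_alpha integral_alpha mulA_assoc[symmetric] inv_beta_simps)
    then show ?thesis by (simp add: self.tensor_act_def case_prod_unfold comp_def)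
  qed
  also have "\<dots> = mulA c (tau_map mulA \<phi> S \<rho>A b)"
    unfolding self.tau_map_eq using module_hom_sum_list[OF mulA_hom_right, of c "\<lambda>(y, v). mulA y (\<phi> (S v))" "\<rho>A b"]
    by (simp add: case_prod_unfold)
  finally show ?thesis .
qed

end

theorem proposition4p5:
  fixes sH :: "'k::comm_ring_1 \<Rightarrow> 'h::ab_group_add \<Rightarrow> 'h"
    and mulH :: "'h \<Rightarrow> 'h \<Rightarrow> 'h" and oneH :: 'h
    and \<Delta> :: "'h \<Rightarrow> ('h \<times> 'h) list" and \<epsilon> :: "'h \<Rightarrow> 'k"
    and S :: "'h \<Rightarrow> 'h" and \<alpha> :: "'h \<Rightarrow> 'h"
    and sA :: "'k \<Rightarrow> 'a::ab_group_add \<Rightarrow> 'a"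
    and mulA :: "'a \<Rightarrow> 'a \<Rightarrow> 'a" and oneA :: 'a and \<beta> :: "'a \<Rightarrow> 'a"
    and \<rho>A :: "'a \<Rightarrow> ('a \<times> 'h) list"
    and \<phi> :: "'h \<Rightarrow> 'a"
    and sM :: "'k \<Rightarrow> 'm::ab_group_add \<Rightarrow> 'm" and \<mu> :: "'m \<Rightarrow> 'm"
    and act :: "'m \<Rightarrow> 'a \<Rightarrow> 'm" and \<rho>M :: "'m \<Rightarrow> ('m \<times> 'h) list"
  assumes H: "monoidal_hom_hopf sH mulH oneH \<Delta> \<epsilon> S \<alpha>"
    and A: "right_hom_comodule_algebra sH mulH oneH \<Delta> \<epsilon> \<alpha> sA mulA oneA \<beta> \<rho>A"
    and phi: "total_integral sH oneH \<Delta> \<alpha> sA oneA \<beta> \<rho>A \<phi>"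
    and phi_mult: "\<forall>h g. \<phi> (mulH h g) = mulA (\<phi> h) (\<phi> g)"
    and M: "relative_hom_hopf_module sH mulH \<Delta> \<epsilon> \<alpha> sA mulA oneA \<beta> \<rho>A sM \<mu> act \<rho>M"
  defines "M0 \<equiv> coinvariants sM sH oneH \<mu> \<rho>M"
    and "C \<equiv> coinvariants sA sH oneH \<beta> \<rho>A"
    and "\<tau>M \<equiv> tau_map act \<phi> S \<rho>M"
    and "\<tau>A \<equiv> tau_map mulA \<phi> S \<rho>A"
  shows
    \<comment> \<open>(1)\<close>
    "((\<forall>m. \<tau>M m \<in> M0) \<and> (\<forall>m\<in>M0. \<tau>M m = m)) \<and>
    \<comment> \<open>(2) tau_A : A \<rightarrow> C is a left (C,beta)-Hom-module morphism retracting the inclusion C \<subseteq> A\<close>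
     ((\<forall>b. \<tau>A b \<in> C) \<and> (\<forall>c\<in>C. \<tau>A c = c) \<and>
         (\<forall>c\<in>C. \<forall>c'\<in>C. mulA c c' \<in> C) \<and> \<beta> ` C = C \<and>
         module_hom sA sA \<tau>A \<and> (\<forall>b. \<tau>A (\<beta> b) = \<beta> (\<tau>A b)) \<and>
         (\<forall>c\<in>C. \<forall>b. \<tau>A (mulA c b) = mulA c (\<tau>A b))) \<and>
    \<comment> \<open>(3) under phi(H) \<subseteq> Z(A): tau_M is a right (C,beta)-Hom-module morphism splitting M0 \<subseteq> M\<close>
     (\<phi> ` UNIV \<subseteq> center mulA \<longrightarrow>
         (\<forall>m\<in>M0. \<forall>c\<in>C. act m c \<in> M0) \<and> \<mu> ` M0 = M0 \<and>
         module_hom sM sM \<tau>M \<and> (\<forall>m. \<tau>M (\<mu> m) = \<mu> (\<tau>M m)) \<and>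
         (\<forall>m. \<forall>c\<in>C. \<tau>M (act m c) = act (\<tau>M m) c) \<and>
         (\<forall>m. \<tau>M m \<in> M0) \<and> (\<forall>m\<in>M0. \<tau>M m = m))"
proof -
  interpret comodule_algebra_integral sH mulH oneH \<Delta> \<epsilon> S \<alpha> sA mulA oneA \<beta> \<rho>A \<phi>
    using H A phi by unfold_locales
  interpret relative_module_integral sH mulH oneH \<Delta> \<epsilon> S \<alpha> sA mulA oneA \<beta> \<rho>A \<phi> sM \<mu> act \<rho>M
    using M by unfold_locales
  show ?thesis
    unfolding assms(6-9)
    by (intro conjI impI allI ballI)
      (simp_all add: tau_in_coinvariants tau_coinvariant coinvariants_act mu_image_coinvariants
        tau_module_hom tau_mu tau_act_coinvariant self.tau_in_coinvariants self.tau_coinvariant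
        self.coinvariants_act self.mu_image_coinvariants self.tau_module_hom self.tau_mu tau_left_linear)
qed

end
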